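(* Let $\mathbb{T}=\mathbb{R}/2\pi\mathbb{Z}$. For $j=1,\dots,m$ let $c_j\in C^\infty(\mathbb{T};\mathbb{C})$ and let $P_j(D_x)$ be a pseudo-differential operator on $\mathbb{T}^n$, $P_j(D_x)u(x)=\sum_{\xi\in\mathbb{Z}^n}e^{ix\cdot\xi}p_j(\xi)\widehat{u}(\xi)$, with $|p_j(\xi)|\le C|\xi|^{\nu_j}$ for all $\xi\in\mathbb{Z}^n$ (some $C>0$, $\nu_j\in\mathbb{R}$). Let $L_j=D_t+c_j(t)P_j(D_x)$, $L=\prod_{j=1}^mL_j=L_1\circ\cdots\circ L_m$, $c_{0,j}=(2\pi)^{-1}\int_0^{2\pi}c_j(t)\,dt$ and $L_0=\prod_{j=1}^m(D_t+c_{0,j}P_j(D_x))$, all acting on $\mathbb{T}^{n+1}=\mathbb{T}_t\times\mathbb{T}^n_x$. Assume $[L_j,L_k]=L_jL_k-L_kL_j=0$ for all $j,k\in\{1,\dots,m\}$. Then: (a) $L$ is globally hypoelliptic if and only if every $L_k$ is globally hypoelliptic; (b) if $L$ is globally hypoelliptic, then $L_0$ is globally hypoelliptic.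
   Context: $D_t=-i\partial_t$; $\widehat{u}(\xi)=(2\pi)^{-n}\int_{\mathbb{T}^n}e^{-ix\cdot\xi}u(x)\,dx$. An operator $\mathcal{P}$ on $\mathbb{T}^N$ is globally hypoelliptic if $u\in\mathcal{D}'(\mathbb{T}^N)$ and $\mathcal{P}u\in C^\infty(\mathbb{T}^N)$ imply $u\in C^\infty(\mathbb{T}^N)$. *)

theory Defs
  imports "HOL-Analysis.Analysis"
begin

text \<open>Distributions on the torus T^(n+1) = T_t x T^n_x are represented by their
Fourier coefficient families u : Z x Z^n -> C, with
u(tau,xi) = (2 pi)^(-(n+1)) * integral of exp(-i(t tau + x.xi)) u(t,x).
D'(T^(n+1)) corresponds exactly to families of at most polynomial growth,
C^infinity(T^(n+1)) to rapidly decreasing families.\<close>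

type_synonym 'n coeffs = "int \<times> (int ^ 'n) \<Rightarrow> complex"

definition inorm :: "int ^ ('n::finite) \<Rightarrow> real" where
  "inorm \<xi> = sqrt (\<Sum>i\<in>UNIV. (real_of_int (\<xi> $ i))^2)"

definition knorm :: "int \<times> (int ^ ('n::finite)) \<Rightarrow> real" where
  "knorm k = sqrt ((real_of_int (fst k))^2 + (inorm (snd k))^2)"

definition distr_coeffs :: "('n::finite) coeffs \<Rightarrow> bool" where
  "distr_coeffs u \<longleftrightarrow> (\<exists>C N. \<forall>k. norm (u k) \<le> C * (1 + knorm k) ^ N)"

definition smooth_coeffs :: "('n::finite) coeffs \<Rightarrow> bool" where
  "smooth_coeffs u \<longleftrightarrow> (\<forall>N::nat. \<exists>C. \<forall>k. norm (u k) \<le> C / (1 + knorm k) ^ N)"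

definition glob_hypoelliptic :: "(('n::finite) coeffs \<Rightarrow> ('n::finite) coeffs) \<Rightarrow> bool" where
  "glob_hypoelliptic P \<longleftrightarrow>
     (\<forall>u. distr_coeffs u \<and> smooth_coeffs (P u) \<longrightarrow> smooth_coeffs u)"

definition smooth_periodic :: "(real \<Rightarrow> complex) \<Rightarrow> bool" where
  "smooth_periodic c \<longleftrightarrow> (\<forall>t. c (t + 2 * pi) = c t) \<and>
     (\<exists>D. D 0 = c \<and> (\<forall>k t. (D k has_vector_derivative D (Suc k) t) (at t)))"

definition fcoef :: "(real \<Rightarrow> complex) \<Rightarrow> int \<Rightarrow> complex" where
  "fcoef c k = (1 / (2 * pi)) *
     integral {0..2*pi} (\<lambda>t. exp (- \<i> * of_int k * of_real t) * c t)"

text \<open>The operator D_t + c(t) P(D_x) on the Fourier side: D_t is multiplication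
by tau, P(D_x) multiplication by p(xi), multiplication by c(t) is convolution
in tau with the Fourier coefficients of c.\<close>
definition Lop :: "(real \<Rightarrow> complex) \<Rightarrow> (int ^ ('n::finite) \<Rightarrow> complex) \<Rightarrow> 'n coeffs \<Rightarrow> ('n::finite) coeffs" where
  "Lop c p u = (\<lambda>(\<tau>, \<xi>). of_int \<tau> * u (\<tau>, \<xi>) +
       p \<xi> * infsum (\<lambda>\<sigma>. fcoef c (\<tau> - \<sigma>) * u (\<sigma>, \<xi>)) UNIV)"

fun Lprod :: "(nat \<Rightarrow> ('a \<Rightarrow> 'a)) \<Rightarrow> nat \<Rightarrow> 'a \<Rightarrow> 'a" where
  "Lprod L 0 = id"
| "Lprod L (Suc k) = Lprod L k \<circ> L (Suc k)"

end

theory Submission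
  imports Defs
begin

(*
  A composition of globally hypoelliptic operators that preserve
  distributions is globally hypoelliptic; conversely, since the factors commute on
  distributions, L = Q L_k with Q preserving smoothness, so L_k u smooth forces L u smooth.

  Part (b) therefore reduces to a single factor: if D_t + c(t) P(D_x) is globally
  hypoelliptic, so is D_t + c_0 P(D_x), which acts on Fourier coefficients as multiplication
  by tau + c_0 p(xi). If the latter is not hypoelliptic, a non-smooth distribution u with
  (tau + c_0 p(xi)) u smooth forces this symbol to decay rapidly at points (tau_0(xi), xi)
  with |xi| unbounded. Let Gamma be the periodic function with D_t Gamma = c - c_0. The
  coefficient sequence of exp(-q Gamma) solves (D_t + q c(t)) E = q c_0 E in l^1, with
  weighted norms growing only polynomially in q. Placing these sequences, normalised in l^1,
  with q = p(xi) at tau_0(xi) on each fibre xi gives a bounded U with L U smooth, while every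
  fibre of U has l^1 norm 1, so U is not smooth.
*)

section \<open>Fourier coefficients of smooth periodic functions\<close>

lemma smooth_periodic_derivatives:
  assumes "smooth_periodic c"
  obtains D where "D 0 = c" "\<And>k t. (D k has_vector_derivative D (Suc k) t) (at t)"
    "\<And>k t. D k (t + 2 * pi) = D k t" "\<And>k. continuous_on UNIV (D k)"
proof -
  from assms obtain D where D0: "D 0 = c"
    and DD: "\<And>k t. (D k has_vector_derivative D (Suc k) t) (at t)"
    and per: "\<And>t. c (t + 2 * pi) = c t"
    unfolding smooth_periodic_def by blast
  have "D k (t + 2 * pi) = D k t" for k t
  proof (induction k arbitrary: t)
    case 0
    then show ?case
      using per D0 by simp
  next
    case (Suc k)
    have "((D k \<circ> (\<lambda>s. s + 2 * pi)) has_vector_derivative (1::real) *\<^sub>R D (Suc k) (t + 2 * pi)) (at t)"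
      by (rule vector_diff_chain_at) (auto intro!: derivative_eq_intros DD)
    moreover have "D k \<circ> (\<lambda>s. s + 2 * pi) = D k"
      using Suc by auto
    ultimately have "(D k has_vector_derivative D (Suc k) (t + 2 * pi)) (at t)"
      by simp
    then show ?case
      using DD vector_derivative_unique_at by metis
  qed
  moreover have "continuous_on UNIV (D k)" for k
    by (meson DD continuous_at_imp_continuous_on has_vector_derivative_continuous)
  ultimately show ?thesis
    using that D0 DD by blast
qed

lemma fcoef_deriv:
  fixes f f' :: "real \<Rightarrow> complex"
  assumes deriv: "\<And>t. (f has_vector_derivative f' t) (at t)"
    and periodic: "f (2 * pi) = f 0"
    and cont: "continuous_on UNIV f" "continuous_on UNIV f'"
  shows "fcoef f' k = \<i> * of_int k * fcoef f k"
proof -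
  define A where "A = - \<i> * of_int k"
  define e where "e t = exp (t *\<^sub>R A)" for t :: real
  have e_eq: "e t = exp (- \<i> * of_int k * of_real t)" for t
    unfolding e_def A_def by (simp add: scaleR_conv_of_real mult_ac)
  have "(e has_vector_derivative A * e t) (at t)" for t
    unfolding e_def by (rule exp_scaleR_has_vector_derivative_left)
  then have "((\<lambda>t. e t * f t) has_vector_derivative e t * f' t + A * e t * f t) (at t)" for t
    using has_vector_derivative_mult[OF _ deriv, of e "A * e t" t] by (simp add: algebra_simps)
  then have "((\<lambda>t. e t * f' t + A * e t * f t) has_integral e (2 * pi) * f (2 * pi) - e 0 * f 0) {0..2 * pi}"
    by (intro fundamental_theorem_of_calculus) (auto intro: has_vector_derivative_at_within)
  moreover have "e (2 * pi) * f (2 * pi) - e 0 * f 0 = 0"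
  proof -
    have "e (2 * pi) = exp (\<i> * (of_int (- k) * (of_real pi * 2)))"
      unfolding e_eq by (simp add: mult_ac)
    then show ?thesis
      using periodic by (simp only: exp_2pi_1_int) (simp add: e_def)
  qed
  ultimately have "integral {0..2 * pi} (\<lambda>t. e t * f' t + A * e t * f t) = 0"
    by (simp add: integral_unique)
  moreover have "(\<lambda>t. e t * f' t) integrable_on {0..2 * pi}" "(\<lambda>t. A * (e t * f t)) integrable_on {0..2 * pi}"
    unfolding e_def using cont
    by (auto intro!: integrable_continuous_real continuous_intros intro: continuous_on_subset)
  ultimately have "integral {0..2 * pi} (\<lambda>t. e t * f' t) + A * integral {0..2 * pi} (\<lambda>t. e t * f t) = 0"
    by (simp add: integral_add mult.assoc)
  then have "integral {0..2 * pi} (\<lambda>t. e t * f' t) = - A * integral {0..2 * pi} (\<lambda>t. e t * f t)"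
    by (simp add: eq_neg_iff_add_eq_0)
  then show ?thesis
    unfolding fcoef_def e_eq[symmetric] A_def by simp
qed

lemma fcoef_higher_deriv:
  assumes "D 0 = c" "\<And>k t. (D k has_vector_derivative D (Suc k) t) (at t)"
    "\<And>k t. D k (t + 2 * pi) = D k t" "\<And>k. continuous_on UNIV (D k)"
  shows "fcoef (D N) k = (\<i> * of_int k) ^ N * fcoef c k"
proof (induction N)
  case (Suc N)
  have "fcoef (D (Suc N)) k = \<i> * of_int k * fcoef (D N) k"
    using assms(3)[of _ 0] by (intro fcoef_deriv) (use assms in auto)
  then show ?case
    using Suc by simp
qed (use assms in simp)

lemma fcoef_bounded:
  assumes "continuous_on UNIV f"
  shows "\<exists>B. \<forall>k. norm (fcoef f k) \<le> B"
proof -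
  have cont: "continuous_on {0..2 * pi} f"
    using assms continuous_on_subset by blast
  then have "bounded (f ` {0..2 * pi})"
    by (intro compact_imp_bounded compact_continuous_image) auto
  then obtain B where B: "\<And>t. t \<in> {0..2 * pi} \<Longrightarrow> norm (f t) \<le> B"
    unfolding bounded_iff by blast
  have "norm (f 0) \<le> B"
    by (rule B) simp
  then have B_nonneg: "0 \<le> B"
    by (rule order_trans[OF norm_ge_zero])
  have "norm (fcoef f k) \<le> B" for k
  proof -
    define g where "g t = exp (- \<i> * of_int k * of_real t) * f t" for t
    have "(g has_integral integral {0..2 * pi} g) {0..2 * pi}"
      unfolding g_def by (intro integrable_integral integrable_continuous_real continuous_intros cont)
    then have "norm (integral {0..2 * pi} g) \<le> B * (2 * pi)"
      using has_integral_bound_real[OF B_nonneg finite.emptyI, of g _ 0 "2 * pi"]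
      by (simp add: g_def norm_mult norm_exp B)
    then have "norm (integral {0..2 * pi} g) / (2 * pi) \<le> B"
      by (simp add: divide_le_eq)
    moreover have "norm (fcoef f k) = norm (integral {0..2 * pi} g) / (2 * pi)"
      unfolding fcoef_def g_def by (simp add: norm_mult norm_divide)
    ultimately show ?thesis
      by simp
  qed
  then show ?thesis
    by blast
qed

lemma fcoef_const: "fcoef (\<lambda>_. a) k = (if k = 0 then a else 0)"
proof (cases "k = 0")
  case True
  then show ?thesis
    unfolding fcoef_def by (simp add: integral_const_real scaleR_conv_of_real)
next
  case False
  have "fcoef (\<lambda>_. 0) k = \<i> * of_int k * fcoef (\<lambda>_. a) k"
    by (rule fcoef_deriv) auto
  then show ?thesis
    using False by (simp add: fcoef_def)
qed

definition rapid_decay :: "(int \<Rightarrow> 'a::real_normed_vector) \<Rightarrow> bool" where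
  "rapid_decay a \<longleftrightarrow> (\<forall>M::nat. \<exists>A. \<forall>k. norm (a k) * (1 + \<bar>real_of_int k\<bar>) ^ M \<le> A)"

lemma one_plus_power_le:
  fixes x :: real
  assumes "x \<ge> 0"
  shows "(1 + x) ^ M \<le> 2 ^ M * (1 + x ^ M)"
proof (cases "x \<le> 1")
  case True
  then have "(1 + x) ^ M \<le> 2 ^ M"
    using assms by (intro power_mono) auto
  then show ?thesis
    using assms by (simp add: add_increasing2 distrib_left)
next
  case False
  then have "(1 + x) ^ M \<le> (2 * x) ^ M"
    by (intro power_mono) auto
  also have "\<dots> \<le> 2 ^ M * (1 + x ^ M)"
    by (simp add: power_mult_distrib)
  finally show ?thesis .
qed

lemma fcoef_rapid_decay:
  assumes "smooth_periodic c"
  shows "rapid_decay (fcoef c)"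
  unfolding rapid_decay_def
proof
  fix M :: nat
  obtain D where D: "D 0 = c" "\<And>k t. (D k has_vector_derivative D (Suc k) t) (at t)"
    "\<And>k t. D k (t + 2 * pi) = D k t" "\<And>k. continuous_on UNIV (D k)"
    using smooth_periodic_derivatives[OF assms] by blast
  obtain B0 where B0: "\<And>k. norm (fcoef (D 0) k) \<le> B0"
    using fcoef_bounded[OF D(4)] by blast
  obtain BM where BM: "\<And>k. norm (fcoef (D M) k) \<le> BM"
    using fcoef_bounded[OF D(4)] by blast
  have "norm (fcoef c k) * (1 + \<bar>real_of_int k\<bar>) ^ M \<le> 2 ^ M * (B0 + BM)" for k
  proof -
    have "norm (fcoef (D M) k) = \<bar>real_of_int k\<bar> ^ M * norm (fcoef c k)"
      using fcoef_higher_deriv[OF D, of M k] by (simp add: norm_mult norm_power)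
    then have bound: "norm (fcoef c k) + \<bar>real_of_int k\<bar> ^ M * norm (fcoef c k) \<le> B0 + BM"
      using B0[of k] BM[of k] D(1) by simp
    have "norm (fcoef c k) * (1 + \<bar>real_of_int k\<bar>) ^ M
        \<le> norm (fcoef c k) * (2 ^ M * (1 + \<bar>real_of_int k\<bar> ^ M))"
      by (intro mult_left_mono one_plus_power_le) auto
    also have "\<dots> = 2 ^ M * (norm (fcoef c k) + \<bar>real_of_int k\<bar> ^ M * norm (fcoef c k))"
      by (simp add: algebra_simps)
    also have "\<dots> \<le> 2 ^ M * (B0 + BM)"
      using bound by simp
    finally show ?thesis .
  qed
  then show "\<exists>A. \<forall>k. norm (fcoef c k) * (1 + \<bar>real_of_int k\<bar>) ^ M \<le> A"
    by blast
qed

section \<open>Summable sequences on the integers\<close>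

lemma summable_on_int_inverse_square:
  "(\<lambda>k::int. 1 / (1 + \<bar>real_of_int k\<bar>) ^ 2) summable_on UNIV"
proof -
  let ?f = "\<lambda>k::int. 1 / (1 + \<bar>real_of_int k\<bar>) ^ 2"
  have "summable (\<lambda>n::nat. inverse (real n ^ 2))"
    by (rule inverse_power_summable) simp
  then have "summable (\<lambda>n::nat. inverse (real (Suc n) ^ 2))"
    by (subst summable_Suc_iff)
  then have nat: "(\<lambda>n::nat. 1 / (1 + real n) ^ 2) summable_on UNIV"
    by (intro summable_nonneg_imp_summable_on) (simp_all add: divide_inverse add.commute)
  have "inj (int :: nat \<Rightarrow> int)" "inj (\<lambda>n::nat. - int n)"
    by (auto simp: inj_on_def)
  then have "?f summable_on range int" "?f summable_on range (\<lambda>n. - int n)"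
    using nat by (simp_all only: summable_on_reindex) (simp_all add: o_def)
  then have "?f summable_on (range int \<union> range (\<lambda>n. - int n))"
    by (rule summable_on_union)
  moreover have "range int \<union> range (\<lambda>n. - int n) = UNIV"
  proof -
    have "k \<in> range int \<union> range (\<lambda>n. - int n)" for k
      by (cases k rule: int_cases2) auto
    then show ?thesis
      by blast
  qed
  ultimately show ?thesis
    by simp
qed

lemma infsum_int_shift: "(\<Sum>\<^sub>\<infinity>s. f (s + c)) = (\<Sum>\<^sub>\<infinity>s::int. f s)"
  by (rule infsum_reindex_bij_witness[of UNIV "\<lambda>s. s - c" "\<lambda>s. s + c"]) auto

lemma infsum_int_reflect: "(\<Sum>\<^sub>\<infinity>s. f (t - s)) = (\<Sum>\<^sub>\<infinity>s::int. f s)"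
  by (rule infsum_reindex_bij_witness[of UNIV "\<lambda>s. t - s" "\<lambda>s. t - s"]) auto

lemma summable_on_int_reflect: "(\<lambda>s. f (t - s)) summable_on UNIV \<longleftrightarrow> f summable_on (UNIV :: int set)"
  by (rule summable_on_reindex_bij_witness[of UNIV "\<lambda>s. t - s" "\<lambda>s. t - s"]) auto

lemma infsum_nat_shift:
  fixes f :: "nat \<Rightarrow> 'a::{comm_monoid_add,t2_space}"
  assumes "f 0 = 0"
  shows "(\<Sum>\<^sub>\<infinity>n. f n) = (\<Sum>\<^sub>\<infinity>n. f (Suc n))"
proof -
  have "(\<Sum>\<^sub>\<infinity>n. f n) = (\<Sum>\<^sub>\<infinity>n\<in>range Suc. f n)"
    by (rule infsum_cong_neutral) (use assms in \<open>auto, metis nat.exhaust rangeI\<close>)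
  then show ?thesis
    by (simp add: infsum_reindex o_def)
qed

lemma infsum_single_nonzero:
  assumes "\<And>s. s \<noteq> t \<Longrightarrow> f s = 0"
  shows "(\<Sum>\<^sub>\<infinity>s. f s) = f t"
proof -
  have "(\<Sum>\<^sub>\<infinity>s. f s) = (\<Sum>\<^sub>\<infinity>s\<in>{t}. f s)"
    by (rule infsum_cong_neutral) (use assms in auto)
  then show ?thesis
    by simp
qed

lemma summable_on_UNIV_pairD:
  fixes f :: "'a \<Rightarrow> 'b \<Rightarrow> 'c::banach"
  assumes "(\<lambda>(x, y). f x y) summable_on UNIV"
  shows "f x summable_on UNIV"
    and "(\<lambda>x. \<Sum>\<^sub>\<infinity>y. f x y) summable_on UNIV"
    and "(\<Sum>\<^sub>\<infinity>x. \<Sum>\<^sub>\<infinity>y. f x y) = (\<Sum>\<^sub>\<infinity>(x, y). f x y)"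
proof -
  have "(\<lambda>(x, y). f x y) summable_on Pair x ` UNIV"
    by (rule summable_on_subset_banach[OF assms]) auto
  then show "f x summable_on UNIV"
    by (subst (asm) summable_on_reindex) (auto simp: inj_on_def o_def)
  show "(\<lambda>x. \<Sum>\<^sub>\<infinity>y. f x y) summable_on UNIV"
    and "(\<Sum>\<^sub>\<infinity>x. \<Sum>\<^sub>\<infinity>y. f x y) = (\<Sum>\<^sub>\<infinity>(x, y). f x y)"
    using summable_on_Sigma_banach[of f UNIV "\<lambda>_. UNIV"] infsum_Sigma'_banach[of f UNIV "\<lambda>_. UNIV"] assms
    by (simp_all add: UNIV_Times_UNIV)
qed

lemma rapid_decay_mono:
  assumes "rapid_decay a" "\<And>k. norm (b k) \<le> norm (a k)"
  shows "rapid_decay b"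
  unfolding rapid_decay_def
proof
  fix M :: nat
  obtain A where "\<And>k. norm (a k) * (1 + \<bar>real_of_int k\<bar>) ^ M \<le> A"
    using assms(1) unfolding rapid_decay_def by blast
  moreover have "norm (b k) * (1 + \<bar>real_of_int k\<bar>) ^ M \<le> norm (a k) * (1 + \<bar>real_of_int k\<bar>) ^ M" for k
    by (rule mult_right_mono[OF assms(2)]) simp
  ultimately have "norm (b k) * (1 + \<bar>real_of_int k\<bar>) ^ M \<le> A" for k
    by (meson order_trans)
  then show "\<exists>A. \<forall>k. norm (b k) * (1 + \<bar>real_of_int k\<bar>) ^ M \<le> A"
    by blast
qed

definition l1 :: "(int \<Rightarrow> 'a::real_normed_vector) \<Rightarrow> bool" where
  "l1 a \<longleftrightarrow> (\<lambda>k. norm (a k)) summable_on UNIV"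

definition l1_norm :: "(int \<Rightarrow> 'a::real_normed_vector) \<Rightarrow> real" where
  "l1_norm a = (\<Sum>\<^sub>\<infinity>k. norm (a k))"

lemma l1_nonneg_iff: "(\<And>k. f k \<ge> 0) \<Longrightarrow> l1 (f :: int \<Rightarrow> real) \<longleftrightarrow> f summable_on UNIV"
  unfolding l1_def by simp

lemma l1_norm_nonneg_eq: "(\<And>k. f k \<ge> 0) \<Longrightarrow> l1_norm (f :: int \<Rightarrow> real) = (\<Sum>\<^sub>\<infinity>k. f k)"
  unfolding l1_norm_def by simp

lemma l1_norm_nonneg: "l1_norm a \<ge> 0"
  unfolding l1_norm_def by (rule infsum_nonneg) simp

lemma norm_le_l1_norm:
  assumes "l1 a"
  shows "norm (a k) \<le> l1_norm a"
proof -
  have "(\<Sum>\<^sub>\<infinity>j\<in>{k}. norm (a j)) \<le> (\<Sum>\<^sub>\<infinity>j. norm (a j))"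
    by (rule infsum_mono_neutral) (use assms in \<open>auto simp: l1_def\<close>)
  then show ?thesis
    by (simp add: l1_norm_def)
qed

lemma l1_cmult: "l1 a \<Longrightarrow> l1 (\<lambda>k. c * a k :: 'a::real_normed_field)"
  unfolding l1_def by (simp add: norm_mult summable_on_cmult_right)

lemma l1_norm_cmult: "l1_norm (\<lambda>k. c * a k :: 'a::real_normed_field) = norm c * l1_norm a"
  unfolding l1_norm_def by (simp add: norm_mult infsum_cmult_right')

lemma l1_of_norms_iff: "l1 (\<lambda>k. norm (a k)) \<longleftrightarrow> l1 a"
  unfolding l1_def by simp

definition weighted :: "nat \<Rightarrow> (int \<Rightarrow> 'a::real_normed_vector) \<Rightarrow> int \<Rightarrow> real" where
  "weighted M a k = (1 + \<bar>real_of_int k\<bar>) ^ M * norm (a k)"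

lemma weighted_nonneg: "weighted M a k \<ge> 0"
  unfolding weighted_def by simp

lemma l1_weighted_0: "l1 (weighted 0 a) \<longleftrightarrow> l1 a"
  unfolding l1_def weighted_def by simp

lemma l1_norm_weighted_0: "l1_norm (weighted 0 a) = l1_norm a"
  unfolding l1_norm_def weighted_def by simp

lemma l1_weighted_rapid_decay:
  assumes "rapid_decay a"
  shows "l1 (weighted M a)"
proof -
  obtain A where A: "\<And>k. norm (a k) * (1 + \<bar>real_of_int k\<bar>) ^ (M + 2) \<le> A"
    using assms unfolding rapid_decay_def by blast
  have "weighted M a k \<le> A * (1 / (1 + \<bar>real_of_int k\<bar>) ^ 2)" for k
  proof -
    have "weighted M a k * (1 + \<bar>real_of_int k\<bar>) ^ 2 \<le> A"
      using A[of k] by (simp add: weighted_def power_add power2_eq_square mult_ac)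
    moreover have "0 < (1 + \<bar>real_of_int k\<bar>) ^ 2"
      by simp
    ultimately show ?thesis
      by (simp add: pos_le_divide_eq)
  qed
  then show ?thesis
    unfolding l1_nonneg_iff[OF weighted_nonneg]
    by (rule summable_on_comparison_test[OF summable_on_cmult_right[OF summable_on_int_inverse_square]])
      (auto simp: weighted_nonneg)
qed

lemma l1_rapid_decay: "rapid_decay a \<Longrightarrow> l1 a"
  using l1_weighted_rapid_decay[of a 0] by (simp add: l1_weighted_0)

definition dirac :: "int \<Rightarrow> 'a::real_normed_field" where
  "dirac k = (if k = 0 then 1 else 0)"

lemma l1_dirac: "l1 dirac"
proof -
  have "finite {k \<in> UNIV. norm (dirac k) \<noteq> 0}"
    by (rule finite_subset[of _ "{0}"]) (auto simp: dirac_def)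
  then show ?thesis
    unfolding l1_def by (rule finite_nonzero_values_imp_summable_on)
qed

lemma l1_norm_dirac: "l1_norm dirac = 1"
  unfolding l1_norm_def by (subst infsum_single_nonzero[where t=0]) (auto simp: dirac_def)

lemma l1_product:
  fixes a b :: "int \<Rightarrow> 'a::{real_normed_field,banach}"
  assumes "l1 a" "l1 b"
  shows "(\<lambda>z. norm (a (fst z) * b (snd z))) summable_on UNIV"
    and "(\<Sum>\<^sub>\<infinity>z. norm (a (fst z) * b (snd z))) = l1_norm a * l1_norm b"
proof -
  let ?F = "\<lambda>z. norm (a (fst z)) * norm (b (snd z))"
  have inner: "((\<lambda>y. ?F (x, y)) has_sum norm (a x) * l1_norm b) UNIV" for x
    using has_sum_cmult_right[OF has_sum_infsum[OF assms(2)[unfolded l1_def]]]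
    by (simp add: l1_norm_def)
  have outer: "((\<lambda>x. norm (a x) * l1_norm b) has_sum l1_norm a * l1_norm b) UNIV"
    using has_sum_cmult_left[OF has_sum_infsum[OF assms(1)[unfolded l1_def]]]
    by (simp add: l1_norm_def)
  have "?F summable_on UNIV \<times> UNIV"
    using inner outer by (intro summable_on_SigmaI[where g = "\<lambda>x. norm (a x) * l1_norm b"])
      (auto simp: has_sum_imp_summable)
  then have "(?F has_sum l1_norm a * l1_norm b) (UNIV \<times> UNIV)"
    using inner outer by (intro has_sum_SigmaI) auto
  then show "(\<lambda>z. norm (a (fst z) * b (snd z))) summable_on UNIV"
    and "(\<Sum>\<^sub>\<infinity>z. norm (a (fst z) * b (snd z))) = l1_norm a * l1_norm b"
    by (auto simp: norm_mult has_sum_imp_summable infsumI)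
qed

section \<open>Convolution\<close>

definition conv :: "(int \<Rightarrow> 'a::real_normed_field) \<Rightarrow> (int \<Rightarrow> 'a) \<Rightarrow> int \<Rightarrow> 'a" where
  "conv a b t = (\<Sum>\<^sub>\<infinity>s. a (t - s) * b s)"

lemma conv_kernel_summable:
  fixes a b :: "int \<Rightarrow> 'a::{real_normed_field,banach}"
  assumes "l1 a" "l1 b"
  shows "(\<lambda>(t, s). norm (a (t - s) * b s)) summable_on UNIV"
    and "(\<Sum>\<^sub>\<infinity>(t, s). norm (a (t - s) * b s)) = l1_norm a * l1_norm b"
proof -
  let ?i = "\<lambda>(x, y). (x + y, y :: int)" and ?j = "\<lambda>(t, s). (t - s, s :: int)"
  show "(\<lambda>(t, s). norm (a (t - s) * b s)) summable_on UNIV"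
    using l1_product(1)[OF assms]
    by (subst summable_on_reindex_bij_witness[of UNIV ?i ?j UNIV "\<lambda>z. norm (a (fst z) * b (snd z))"]) auto
  have "(\<Sum>\<^sub>\<infinity>(t, s). norm (a (t - s) * b s)) = (\<Sum>\<^sub>\<infinity>z. norm (a (fst z) * b (snd z)))"
    by (rule infsum_reindex_bij_witness[of UNIV ?i ?j]) auto
  then show "(\<Sum>\<^sub>\<infinity>(t, s). norm (a (t - s) * b s)) = l1_norm a * l1_norm b"
    using l1_product(2)[OF assms] by simp
qed

lemma conv_summable:
  fixes a b :: "int \<Rightarrow> 'a::{real_normed_field,banach}"
  assumes "l1 a" "l1 b"
  shows "(\<lambda>s. norm (a (t - s) * b s)) summable_on UNIV"
    and "(\<lambda>s. a (t - s) * b s) summable_on UNIV"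
proof -
  show "(\<lambda>s. norm (a (t - s) * b s)) summable_on UNIV"
    using summable_on_UNIV_pairD(1)[OF conv_kernel_summable(1)[OF assms]] .
  then show "(\<lambda>s. a (t - s) * b s) summable_on UNIV"
    by (rule abs_summable_summable)
qed

lemma l1_conv:
  fixes a b :: "int \<Rightarrow> 'a::{real_normed_field,banach}"
  assumes "l1 a" "l1 b"
  shows "l1 (conv a b)" and "l1_norm (conv a b) \<le> l1_norm a * l1_norm b"
proof -
  let ?K = "\<lambda>t. \<Sum>\<^sub>\<infinity>s. norm (a (t - s) * b s)"
  have K: "?K summable_on UNIV" "(\<Sum>\<^sub>\<infinity>t. ?K t) = l1_norm a * l1_norm b"
    using summable_on_UNIV_pairD(2,3)[OF conv_kernel_summable(1)[OF assms]]
      conv_kernel_summable(2)[OF assms] by auto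
  have le: "norm (conv a b t) \<le> ?K t" for t
    unfolding conv_def by (rule norm_infsum_bound) (use conv_summable(1)[OF assms] in simp)
  show l1: "l1 (conv a b)"
    unfolding l1_def by (rule summable_on_comparison_test[OF K(1)]) (use le in auto)
  have "l1_norm (conv a b) \<le> (\<Sum>\<^sub>\<infinity>t. ?K t)"
    unfolding l1_norm_def by (rule infsum_mono[OF _ K(1)]) (use le l1 in \<open>auto simp: l1_def\<close>)
  then show "l1_norm (conv a b) \<le> l1_norm a * l1_norm b"
    using K(2) by simp
qed

lemma infsum_conv:
  fixes a b :: "int \<Rightarrow> 'a::{real_normed_field,banach}"
  assumes "l1 a" "l1 b"
  shows "(\<Sum>\<^sub>\<infinity>t. conv a b t) = (\<Sum>\<^sub>\<infinity>k. a k) * (\<Sum>\<^sub>\<infinity>k. b k)"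
proof -
  let ?i = "\<lambda>(x, y). (x + y, y :: int)" and ?j = "\<lambda>(t, s). (t - s, s :: int)"
  have kernel: "(\<lambda>(t, s). a (t - s) * b s) summable_on UNIV"
    using abs_summable_summable conv_kernel_summable(1)[OF assms] by (simp add: case_prod_unfold)
  have product: "(\<lambda>(x, y). a x * b y) summable_on UNIV"
    using abs_summable_summable l1_product(1)[OF assms] by (simp add: case_prod_unfold)
  have "(\<Sum>\<^sub>\<infinity>t. conv a b t) = (\<Sum>\<^sub>\<infinity>(t, s). a (t - s) * b s)"
    unfolding conv_def by (rule summable_on_UNIV_pairD(3)[OF kernel])
  also have "\<dots> = (\<Sum>\<^sub>\<infinity>(x, y). a x * b y)"
    by (rule infsum_reindex_bij_witness[of UNIV ?i ?j]) auto
  also have "\<dots> = (\<Sum>\<^sub>\<infinity>x. \<Sum>\<^sub>\<infinity>y. a x * b y)"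
    by (rule summable_on_UNIV_pairD(3)[OF product, symmetric])
  also have "\<dots> = (\<Sum>\<^sub>\<infinity>k. a k) * (\<Sum>\<^sub>\<infinity>k. b k)"
    by (simp add: infsum_cmult_right' infsum_cmult_left')
  finally show ?thesis .
qed

lemma conv_commute: "conv a b = conv b a"
proof
  fix t
  show "conv a b t = conv b a t"
    unfolding conv_def
    using infsum_int_reflect[of "\<lambda>s. a (t - s) * b s" t] by (simp add: mult.commute)
qed

lemma conv_cmult_left: "conv (\<lambda>k. c * a k) b t = c * conv a b t"
  unfolding conv_def by (simp add: mult.assoc infsum_cmult_right')

lemma conv_cmult_right: "conv a (\<lambda>k. c * b k) t = c * conv a b t"
  unfolding conv_def by (simp add: mult.left_commute infsum_cmult_right')

lemma conv_add_left:
  fixes a a' b :: "int \<Rightarrow> 'a::{real_normed_field,banach}"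
  assumes "l1 a" "l1 a'" "l1 b"
  shows "conv (\<lambda>k. a k + a' k) b t = conv a b t + conv a' b t"
  unfolding conv_def
  using infsum_add[OF conv_summable(2)[OF assms(1,3)] conv_summable(2)[OF assms(2,3)]]
  by (simp add: distrib_right)

lemma conv_shift_right: "conv a (\<lambda>s. b (s - c)) t = conv a b (t - c)"
  unfolding conv_def using infsum_int_shift[of "\<lambda>s. a (t - s) * b (s - c)" c]
  by (simp add: algebra_simps)

lemma conv_dirac_right: "conv a dirac t = a t"
  unfolding conv_def dirac_def by (subst infsum_single_nonzero[where t=0]) auto

lemma conv_dirac_left: "conv dirac a t = a t"
  using conv_dirac_right by (metis conv_commute)

lemma conv_assoc:
  fixes a b x :: "int \<Rightarrow> 'a::{real_normed_field,banach}"
  assumes a: "l1 a" and b: "l1 b" and x: "l1 x"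
  shows "conv a (conv b x) t = conv (conv a b) x t"
proof -
  define F where "F s r = a (t - s) * (b (s - r) * x r)" for s r
  let ?nb = "\<lambda>k. norm (b k)" and ?nx = "\<lambda>k. norm (x k)"
  have "(\<lambda>(s, r). norm (F s r)) summable_on UNIV"
  proof -
    have inner: "((\<lambda>r. norm (F s r)) has_sum norm (a (t - s)) * conv ?nb ?nx s) UNIV" for s
      using has_sum_cmult_right[OF has_sum_infsum[OF conv_summable(1)[OF b x, of s]]]
      by (simp add: F_def conv_def norm_mult)
    have "l1 (conv ?nb ?nx)"
      using b x by (intro l1_conv) (simp_all add: l1_of_norms_iff)
    then have "(\<lambda>s. norm (a (t - s)) * conv ?nb ?nx s) summable_on UNIV"
      using conv_summable(2)[of "\<lambda>k. norm (a k)" "conv ?nb ?nx" t] a by (simp add: l1_of_norms_iff)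
    then have "(\<lambda>(s, r). norm (F s r)) summable_on UNIV \<times> UNIV"
      using inner by (intro summable_on_SigmaI[where f = "\<lambda>(s, r). norm (F s r)"]) auto
    then show ?thesis
      by (simp add: UNIV_Times_UNIV)
  qed
  then have summable: "(\<lambda>(s, r). F s r) summable_on UNIV \<times> UNIV"
    using abs_summable_summable by (fastforce simp: UNIV_Times_UNIV case_prod_unfold)
  have shift: "(\<Sum>\<^sub>\<infinity>s. a (t - s) * b (s - r)) = conv a b (t - r)" for r
    unfolding conv_def
    using infsum_int_shift[of "\<lambda>s. a (t - s) * b (s - r)" r] by (simp add: algebra_simps)
  have "conv a (conv b x) t = (\<Sum>\<^sub>\<infinity>s. \<Sum>\<^sub>\<infinity>r. F s r)"
    unfolding conv_def F_def by (simp add: infsum_cmult_right')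
  also have "\<dots> = (\<Sum>\<^sub>\<infinity>r. \<Sum>\<^sub>\<infinity>s. F s r)"
    by (rule infsum_swap_banach[OF summable])
  also have "\<dots> = (\<Sum>\<^sub>\<infinity>r. conv a b (t - r) * x r)"
    unfolding F_def by (simp add: mult.assoc[symmetric] infsum_cmult_left' shift)
  also have "\<dots> = conv (conv a b) x t"
    by (simp add: conv_def)
  finally show ?thesis .
qed

lemma conv_left_commute:
  fixes a b x :: "int \<Rightarrow> 'a::{real_normed_field,banach}"
  assumes "l1 a" "l1 b" "l1 x"
  shows "conv a (conv b x) t = conv b (conv a x) t"
  using conv_assoc[OF assms] conv_assoc[OF assms(2,1,3)] by (simp add: conv_commute[of a b])

lemma conv_leibniz:
  fixes a b :: "int \<Rightarrow> 'a::{real_normed_field,banach}"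
  assumes "l1 a" "l1 b" "l1 (\<lambda>k. of_int k * a k)" "l1 (\<lambda>k. of_int k * b k)"
  shows "of_int t * conv a b t = conv (\<lambda>k. of_int k * a k) b t + conv a (\<lambda>k. of_int k * b k) t"
proof -
  have "of_int t * conv a b t = (\<Sum>\<^sub>\<infinity>s. of_int (t - s) * a (t - s) * b s + a (t - s) * (of_int s * b s))"
    unfolding conv_def infsum_cmult_right'[symmetric] by (rule infsum_cong) (simp add: algebra_simps)
  also have "\<dots> = conv (\<lambda>k. of_int k * a k) b t + conv a (\<lambda>k. of_int k * b k) t"
    unfolding conv_def
    by (rule infsum_add) (use conv_summable(2)[OF assms(3,2)] conv_summable(2)[OF assms(1,4)] in auto)
  finally show ?thesis .
qed

lemma l1_series:
  fixes f :: "nat \<Rightarrow> int \<Rightarrow> 'a::{real_normed_field,banach}"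
  assumes l1: "\<And>n. l1 (f n)" and summable: "(\<lambda>n. l1_norm (f n)) summable_on UNIV"
  shows "l1 (\<lambda>t. \<Sum>\<^sub>\<infinity>n. f n t)"
    and "(\<Sum>\<^sub>\<infinity>t. \<Sum>\<^sub>\<infinity>n. f n t) = (\<Sum>\<^sub>\<infinity>n. \<Sum>\<^sub>\<infinity>t. f n t)"
    and "l1 d \<Longrightarrow> conv d (\<lambda>t. \<Sum>\<^sub>\<infinity>n. f n t) t = (\<Sum>\<^sub>\<infinity>n. conv d (f n) t)"
proof -
  have "(\<lambda>(n, t). norm (f n t)) summable_on UNIV \<times> UNIV"
    using l1 summable
    by (intro summable_on_SigmaI[where g = "\<lambda>n. l1_norm (f n)"])
      (auto simp: l1_def l1_norm_def intro: has_sum_infsum)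
  then have norms: "(\<lambda>(t, n). norm (f n t)) summable_on UNIV"
    by (subst (asm) summable_on_swap) (simp add: UNIV_Times_UNIV)
  then have joint: "(\<lambda>(t, n). f n t) summable_on UNIV \<times> UNIV"
    using abs_summable_summable by (fastforce simp: UNIV_Times_UNIV case_prod_unfold)
  have le: "norm (\<Sum>\<^sub>\<infinity>n. f n t) \<le> (\<Sum>\<^sub>\<infinity>n. norm (f n t))" for t
    by (rule norm_infsum_bound) (use summable_on_UNIV_pairD(1)[OF norms] in simp)
  show "l1 (\<lambda>t. \<Sum>\<^sub>\<infinity>n. f n t)"
    unfolding l1_def by (rule summable_on_comparison_test[OF summable_on_UNIV_pairD(2)[OF norms]])
      (use le in auto)
  show "(\<Sum>\<^sub>\<infinity>t. \<Sum>\<^sub>\<infinity>n. f n t) = (\<Sum>\<^sub>\<infinity>n. \<Sum>\<^sub>\<infinity>t. f n t)"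
    by (rule infsum_swap_banach[OF joint])
  assume d: "l1 d"
  have "(\<lambda>(s, n). norm (d (t - s) * f n s)) summable_on UNIV"
  proof (rule summable_on_comparison_test)
    show "(\<lambda>(s, n). l1_norm d * norm (f n s)) summable_on UNIV"
      using summable_on_cmult_right[OF norms] by (simp add: case_prod_unfold)
    show "(case z of (s, n) \<Rightarrow> norm (d (t - s) * f n s)) \<le> (case z of (s, n) \<Rightarrow> l1_norm d * norm (f n s))" for z
      using norm_le_l1_norm[OF d] by (auto simp: norm_mult intro: mult_right_mono split: prod.split)
  qed (auto split: prod.split)
  then have "(\<lambda>(s, n). d (t - s) * f n s) summable_on UNIV \<times> UNIV"
    using abs_summable_summable by (fastforce simp: UNIV_Times_UNIV case_prod_unfold)
  then show "conv d (\<lambda>t. \<Sum>\<^sub>\<infinity>n. f n t) t = (\<Sum>\<^sub>\<infinity>n. conv d (f n) t)"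
    unfolding conv_def infsum_cmult_right'[symmetric] by (rule infsum_swap_banach)
qed

lemma peetre_int: "1 + \<bar>real_of_int t\<bar> \<le> (1 + \<bar>real_of_int (t - s)\<bar>) * (1 + \<bar>real_of_int s\<bar>)"
proof -
  have "(1 + \<bar>real_of_int (t - s)\<bar>) * (1 + \<bar>real_of_int s\<bar>)
      = 1 + \<bar>real_of_int (t - s)\<bar> + \<bar>real_of_int s\<bar> + \<bar>real_of_int (t - s)\<bar> * \<bar>real_of_int s\<bar>"
    by (simp add: algebra_simps del: of_int_diff)
  moreover have "0 \<le> \<bar>real_of_int (t - s)\<bar> * \<bar>real_of_int s\<bar>"
    by simp
  ultimately show ?thesis
    by linarith
qed

lemma weighted_conv_le:
  fixes a b :: "int \<Rightarrow> 'a::{real_normed_field,banach}"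
  assumes "l1 a" "l1 b" "l1 (weighted M a)" "l1 (weighted M b)"
  shows "(1 + \<bar>real_of_int t\<bar>) ^ M * norm (conv a b t) \<le> conv (weighted M a) (weighted M b) t"
proof -
  have "(1 + \<bar>real_of_int t\<bar>) ^ M * norm (conv a b t)
      \<le> (1 + \<bar>real_of_int t\<bar>) ^ M * (\<Sum>\<^sub>\<infinity>s. norm (a (t - s) * b s))"
    unfolding conv_def using conv_summable(1)[OF assms(1,2)]
    by (intro mult_left_mono norm_infsum_bound) auto
  also have "\<dots> \<le> (\<Sum>\<^sub>\<infinity>s. weighted M a (t - s) * weighted M b s)"
    unfolding infsum_cmult_right'[symmetric]
  proof (rule infsum_mono)
    show "(\<lambda>s. (1 + \<bar>real_of_int t\<bar>) ^ M * norm (a (t - s) * b s)) summable_on UNIV"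
      by (rule summable_on_cmult_right[OF conv_summable(1)[OF assms(1,2)]])
    show "(\<lambda>s. weighted M a (t - s) * weighted M b s) summable_on UNIV"
      by (rule conv_summable(2)[OF assms(3,4)])
    show "(1 + \<bar>real_of_int t\<bar>) ^ M * norm (a (t - s) * b s) \<le> weighted M a (t - s) * weighted M b s" for s
      using mult_right_mono[OF peetre_int[of t s, THEN power_mono[where n=M]], of "norm (a (t - s) * b s)"]
      by (simp add: weighted_def norm_mult power_mult_distrib mult_ac)
  qed
  finally show ?thesis
    by (simp add: conv_def)
qed

section \<open>Convolution exponentials\<close>

primrec conv_power :: "(int \<Rightarrow> 'a::real_normed_field) \<Rightarrow> nat \<Rightarrow> int \<Rightarrow> 'a" where
  "conv_power a 0 = dirac"
| "conv_power a (Suc n) = conv a (conv_power a n)"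

lemma l1_conv_power:
  fixes a :: "int \<Rightarrow> 'a::{real_normed_field,banach}"
  assumes "l1 a"
  shows "l1 (conv_power a n)" and "l1_norm (conv_power a n) \<le> l1_norm a ^ n"
proof -
  have "l1 (conv_power a n) \<and> l1_norm (conv_power a n) \<le> l1_norm a ^ n"
  proof (induction n)
    case 0
    then show ?case
      by (simp add: l1_dirac l1_norm_dirac)
  next
    case (Suc n)
    then have "l1_norm (conv_power a (Suc n)) \<le> l1_norm a * l1_norm (conv_power a n)"
      using l1_conv(2)[OF assms] by simp
    also have "\<dots> \<le> l1_norm a * l1_norm a ^ n"
      using Suc by (intro mult_left_mono l1_norm_nonneg) auto
    finally show ?case
      using l1_conv(1)[OF assms] Suc by simp
  qed
  then show "l1 (conv_power a n)" and "l1_norm (conv_power a n) \<le> l1_norm a ^ n"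
    by auto
qed

lemma infsum_conv_power:
  fixes a :: "int \<Rightarrow> 'a::{real_normed_field,banach}"
  assumes "l1 a"
  shows "(\<Sum>\<^sub>\<infinity>t. conv_power a n t) = (\<Sum>\<^sub>\<infinity>k. a k) ^ n"
proof (induction n)
  case 0
  show ?case
    unfolding conv_power.simps dirac_def by (subst infsum_single_nonzero[where t=0]) auto
next
  case (Suc n)
  then show ?case
    using infsum_conv[OF assms l1_conv_power(1)[OF assms]] by simp
qed

lemma conv_power_leibniz:
  fixes C d :: "int \<Rightarrow> 'a::{real_normed_field,banach}"
  assumes C: "l1 C" and d: "l1 d" and Cd: "\<And>k. of_int k * C k = d k"
  shows "of_int t * conv_power C (Suc n) t = of_nat (Suc n) * conv d (conv_power C n) t"
proof -
  have "l1 (\<lambda>k. of_int k * conv_power C n k) \<and>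
      (\<forall>t. of_int t * conv_power C (Suc n) t = of_nat (Suc n) * conv d (conv_power C n) t)"
  proof (induction n)
    case 0
    have "(\<lambda>k. of_int k * conv_power C 0 k) = (\<lambda>k. 0)"
      by (auto simp: dirac_def)
    moreover have "l1 (\<lambda>k. 0 :: 'a)"
      by (simp add: l1_def)
    ultimately show ?case
      using Cd by (simp add: conv_dirac_right)
  next
    case (Suc n)
    note l1_power = l1_conv_power(1)[OF C]
    have eq: "(\<lambda>k. of_int k * conv_power C (Suc n) k) = (\<lambda>k. of_nat (Suc n) * conv d (conv_power C n) k)"
      using Suc by auto
    have l1_Suc: "l1 (\<lambda>k. of_int k * conv_power C (Suc n) k)"
      unfolding eq by (intro l1_cmult l1_conv(1) d l1_power)
    have "of_int t * conv_power C (Suc (Suc n)) t = of_nat (Suc (Suc n)) * conv d (conv_power C (Suc n)) t" for t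
    proof -
      have "of_int t * conv_power C (Suc (Suc n)) t
          = conv (\<lambda>k. of_int k * C k) (conv_power C (Suc n)) t + conv C (\<lambda>k. of_int k * conv_power C (Suc n) k) t"
        using conv_leibniz[OF C l1_power[of "Suc n"] _ l1_Suc] d Cd by simp
      also have "\<dots> = conv d (conv_power C (Suc n)) t + of_nat (Suc n) * conv C (conv d (conv_power C n)) t"
        unfolding eq conv_cmult_right using Cd by simp
      also have "conv C (conv d (conv_power C n)) t = conv d (conv_power C (Suc n)) t"
        using conv_left_commute[OF C d l1_power] by simp
      finally show ?thesis
        by (simp add: algebra_simps)
    qed
    then show ?case
      using l1_Suc by blast
  qed
  then show ?thesis
    by blast
qed

text \<open>If \<open>C\<close> is the coefficient sequence of a periodic function \<open>\<Gamma>\<close>, then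
  \<open>conv_exp z C\<close> is that of \<open>exp (z \<Gamma>)\<close>.\<close>

definition conv_exp :: "'a::{real_normed_field,banach} \<Rightarrow> (int \<Rightarrow> 'a) \<Rightarrow> int \<Rightarrow> 'a" where
  "conv_exp z C t = (\<Sum>\<^sub>\<infinity>n. (z ^ n / fact n) * conv_power C n t)"

lemma conv_exp_series_summable:
  fixes C :: "int \<Rightarrow> 'a::{real_normed_field,banach}"
  assumes C: "l1 C"
  shows "(\<lambda>n. l1_norm (\<lambda>t. (z ^ n / fact n) * conv_power C n t)) summable_on UNIV"
proof (rule summable_on_comparison_test)
  show "(\<lambda>n. (norm z * l1_norm C) ^ n / fact n) summable_on UNIV"
    using summable_exp_generic[of "norm z * l1_norm C"]
    by (intro summable_nonneg_imp_summable_on) (simp_all add: divide_inverse mult.commute l1_norm_nonneg)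
  show "l1_norm (\<lambda>t. (z ^ n / fact n) * conv_power C n t) \<le> (norm z * l1_norm C) ^ n / fact n" for n
  proof -
    have "l1_norm (\<lambda>t. (z ^ n / fact n) * conv_power C n t) = norm z ^ n / fact n * l1_norm (conv_power C n)"
      by (subst l1_norm_cmult) (simp add: norm_power norm_divide)
    also have "\<dots> \<le> norm z ^ n / fact n * l1_norm C ^ n"
      by (intro mult_left_mono l1_conv_power(2)[OF C]) auto
    finally show ?thesis
      by (simp add: power_mult_distrib divide_inverse mult_ac)
  qed
qed (simp add: l1_norm_nonneg)

lemma l1_conv_exp:
  assumes "l1 C"
  shows "l1 (conv_exp z C)"
  unfolding conv_exp_def
  by (rule l1_series(1)[OF l1_cmult[OF l1_conv_power(1)[OF assms]] conv_exp_series_summable[OF assms]])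

lemma infsum_conv_exp:
  fixes C :: "int \<Rightarrow> 'a::{real_normed_field,banach}"
  assumes C: "l1 C"
  shows "(\<Sum>\<^sub>\<infinity>t. conv_exp z C t) = exp (z * (\<Sum>\<^sub>\<infinity>k. C k))"
proof -
  let ?w = "z * (\<Sum>\<^sub>\<infinity>k. C k)"
  have "(\<Sum>\<^sub>\<infinity>t. conv_exp z C t) = (\<Sum>\<^sub>\<infinity>n. \<Sum>\<^sub>\<infinity>t. (z ^ n / fact n) * conv_power C n t)"
    unfolding conv_exp_def
    by (rule l1_series(2)[OF l1_cmult[OF l1_conv_power(1)[OF C]] conv_exp_series_summable[OF C]])
  also have "\<dots> = (\<Sum>\<^sub>\<infinity>n. ?w ^ n / fact n)"
    by (simp only: infsum_cmult_right' infsum_conv_power[OF C]) (simp add: power_mult_distrib)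
  also have "\<dots> = exp ?w"
    using norm_summable_imp_has_sum[OF summable_norm_exp exp_converges, of ?w]
    by (simp add: infsumI scaleR_conv_of_real divide_inverse mult.commute)
  finally show ?thesis .
qed

lemma conv_exp_nonzero:
  assumes "l1 C"
  shows "\<exists>t. conv_exp z C t \<noteq> 0"
proof (rule ccontr)
  assume "\<nexists>t. conv_exp z C t \<noteq> 0"
  then have "(\<Sum>\<^sub>\<infinity>t. conv_exp z C t) = 0"
    by (simp add: infsum_0)
  then show False
    using infsum_conv_exp[OF assms, of z] by simp
qed

lemma conv_exp_leibniz:
  fixes C d :: "int \<Rightarrow> 'a::{real_normed_field,banach}"
  assumes C: "l1 C" and d: "l1 d" and Cd: "\<And>k. of_int k * C k = d k"
  shows "of_int t * conv_exp z C t = z * conv d (conv_exp z C) t"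
proof -
  define \<alpha> where "\<alpha> n = z ^ n / fact n" for n
  have \<alpha>_Suc: "\<alpha> (Suc m) * of_nat (Suc m) = z * \<alpha> m" for m
    unfolding \<alpha>_def by (simp add: field_simps del: of_nat_Suc)
  have "of_int t * conv_exp z C t = (\<Sum>\<^sub>\<infinity>n. \<alpha> n * (of_int t * conv_power C n t))"
    unfolding conv_exp_def \<alpha>_def infsum_cmult_right'[symmetric] by (simp add: mult_ac)
  also have "\<dots> = (\<Sum>\<^sub>\<infinity>m. \<alpha> (Suc m) * (of_int t * conv_power C (Suc m) t))"
    by (rule infsum_nat_shift) (simp add: dirac_def)
  also have "\<dots> = (\<Sum>\<^sub>\<infinity>m. z * conv d (\<lambda>s. \<alpha> m * conv_power C m s) t)"
  proof (rule infsum_cong)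
    fix m
    have "\<alpha> (Suc m) * (of_int t * conv_power C (Suc m) t) = \<alpha> (Suc m) * of_nat (Suc m) * conv d (conv_power C m) t"
      by (simp only: conv_power_leibniz[OF C d Cd] mult.assoc)
    also have "\<dots> = z * (\<alpha> m * conv d (conv_power C m) t)"
      by (simp only: \<alpha>_Suc mult.assoc)
    also have "\<dots> = z * conv d (\<lambda>s. \<alpha> m * conv_power C m s) t"
      by (simp only: conv_cmult_right)
    finally show "\<alpha> (Suc m) * (of_int t * conv_power C (Suc m) t) = z * conv d (\<lambda>s. \<alpha> m * conv_power C m s) t" .
  qed
  also have "\<dots> = z * conv d (conv_exp z C) t"
    unfolding infsum_cmult_right' conv_exp_def \<alpha>_def
    using l1_series(3)[OF l1_cmult[OF l1_conv_power(1)[OF C]] conv_exp_series_summable[OF C] d] by simp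
  finally show ?thesis .
qed

lemma normalized_conv_exp_eigen:
  fixes C d :: "int \<Rightarrow> 'a::{real_normed_field,banach}"
  assumes C: "l1 C" and d: "l1 d" and Cd: "\<And>k. of_int k * C k = d k"
  shows "\<exists>E. l1 E \<and> l1_norm E = 1 \<and> (\<forall>t. of_int t * E t = z * conv d E t)"
proof -
  define G where "G = conv_exp z C"
  define E where "E = (\<lambda>t. inverse (of_real (l1_norm G)) * G t)"
  have l1_G: "l1 G"
    unfolding G_def by (rule l1_conv_exp[OF C])
  obtain t where "G t \<noteq> 0"
    using conv_exp_nonzero[OF C] unfolding G_def by blast
  then have "0 < l1_norm G"
    using norm_le_l1_norm[OF l1_G, of t] by (metis zero_less_norm_iff order_less_le_trans)
  then have "l1_norm E = 1"
    unfolding E_def l1_norm_cmult by (simp add: norm_inverse)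
  moreover have "of_int t * E t = z * conv d E t" for t
  proof -
    have "of_int t * E t = inverse (of_real (l1_norm G)) * (of_int t * G t)"
      unfolding E_def by (rule mult.left_commute)
    also have "of_int t * G t = z * conv d G t"
      unfolding G_def by (rule conv_exp_leibniz[OF C d Cd])
    also have "inverse (of_real (l1_norm G)) * (z * conv d G t) = z * conv d E t"
      unfolding E_def conv_cmult_right by (rule mult.left_commute)
    finally show ?thesis .
  qed
  moreover have "l1 E"
    unfolding E_def by (rule l1_cmult[OF l1_G])
  ultimately show ?thesis
    by blast
qed

lemma eigen_weighted_step:
  fixes E d :: "int \<Rightarrow> 'a::{real_normed_field,banach}"
  assumes E: "l1 E" "l1 (weighted M E)" and d: "l1 d" "l1 (weighted M d)"
    and eigen: "\<And>t. of_int t * E t = z * conv d E t"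
  shows "l1 (weighted (Suc M) E)"
    and "l1_norm (weighted (Suc M) E) \<le> (1 + norm z * l1_norm (weighted M d)) * l1_norm (weighted M E)"
proof -
  let ?dw = "weighted M d" and ?Ew = "weighted M E"
  have pointwise: "weighted (Suc M) E t \<le> ?Ew t + norm z * conv ?dw ?Ew t" for t
  proof -
    have "weighted (Suc M) E t = ?Ew t + (1 + \<bar>real_of_int t\<bar>) ^ M * norm (of_int t * E t)"
      by (simp add: weighted_def norm_mult algebra_simps)
    also have "(1 + \<bar>real_of_int t\<bar>) ^ M * norm (of_int t * E t)
        = norm z * ((1 + \<bar>real_of_int t\<bar>) ^ M * norm (conv d E t))"
      by (simp add: eigen norm_mult)
    also have "\<dots> \<le> norm z * conv ?dw ?Ew t"
      by (intro mult_left_mono weighted_conv_le[OF d(1) E(1) d(2) E(2)]) auto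
    finally show ?thesis
      by simp
  qed
  have conv_nonneg: "conv ?dw ?Ew t \<ge> 0" for t
    unfolding conv_def by (intro infsum_nonneg mult_nonneg_nonneg weighted_nonneg)
  have summable_Ew: "?Ew summable_on UNIV" and summable_conv: "conv ?dw ?Ew summable_on UNIV"
    using E(2) l1_conv(1)[OF d(2) E(2)] conv_nonneg by (simp_all add: l1_nonneg_iff weighted_nonneg)
  have summable_rhs: "(\<lambda>t. ?Ew t + norm z * conv ?dw ?Ew t) summable_on UNIV"
    by (intro summable_on_add summable_Ew summable_on_cmult_right summable_conv)
  have summable: "weighted (Suc M) E summable_on UNIV"
    by (rule summable_on_comparison_test[OF summable_rhs]) (use pointwise weighted_nonneg in auto)
  then show "l1 (weighted (Suc M) E)"
    by (simp add: l1_nonneg_iff weighted_nonneg)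
  have "l1_norm (weighted (Suc M) E) \<le> (\<Sum>\<^sub>\<infinity>t. ?Ew t + norm z * conv ?dw ?Ew t)"
    unfolding l1_norm_nonneg_eq[OF weighted_nonneg]
    by (rule infsum_mono[OF summable summable_rhs]) (rule pointwise)
  also have "\<dots> = (1 + norm z * l1_norm ?dw) * l1_norm ?Ew"
    using infsum_conv[OF d(2) E(2)]
    by (simp add: infsum_add[OF summable_Ew summable_on_cmult_right[OF summable_conv]] infsum_cmult_right'
        l1_norm_nonneg_eq[OF weighted_nonneg] algebra_simps)
  finally show "l1_norm (weighted (Suc M) E) \<le> (1 + norm z * l1_norm ?dw) * l1_norm ?Ew" .
qed

lemma eigen_weighted_l1_bound:
  fixes E d :: "int \<Rightarrow> 'a::{real_normed_field,banach}"
  assumes E: "l1 E" and d: "rapid_decay d" and eigen: "\<And>t. of_int t * E t = z * conv d E t"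
    and "M \<le> R"
  shows "l1 (weighted M E) \<and> l1_norm (weighted M E) \<le> (1 + norm z * l1_norm (weighted R d)) ^ M * l1_norm E"
  using \<open>M \<le> R\<close>
proof (induction M)
  case 0
  then show ?case
    using E by (simp add: l1_weighted_0 l1_norm_weighted_0)
next
  case (Suc M)
  have l1_d: "l1 (weighted N d)" for N
    by (rule l1_weighted_rapid_decay[OF d])
  have "l1_norm (weighted M d) \<le> l1_norm (weighted R d)"
    unfolding l1_norm_nonneg_eq[OF weighted_nonneg]
  proof (rule infsum_mono)
    show "weighted M d summable_on UNIV" "weighted R d summable_on UNIV"
      using l1_d by (simp_all add: l1_nonneg_iff weighted_nonneg)
    show "weighted M d k \<le> weighted R d k" for k
      using Suc.prems unfolding weighted_def by (intro mult_right_mono power_increasing) auto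
  qed
  then have growth: "1 + norm z * l1_norm (weighted M d) \<le> 1 + norm z * l1_norm (weighted R d)"
    by (simp add: mult_left_mono)
  have IH: "l1 (weighted M E)" "l1_norm (weighted M E) \<le> (1 + norm z * l1_norm (weighted R d)) ^ M * l1_norm E"
    using Suc by auto
  note step = eigen_weighted_step[OF E IH(1) l1_rapid_decay[OF d] l1_d eigen]
  have "l1_norm (weighted (Suc M) E) \<le> (1 + norm z * l1_norm (weighted M d)) * l1_norm (weighted M E)"
    by (rule step(2))
  also have "\<dots> \<le> (1 + norm z * l1_norm (weighted R d)) * ((1 + norm z * l1_norm (weighted R d)) ^ M * l1_norm E)"
    using growth IH(2) by (intro mult_mono) (simp_all add: l1_norm_nonneg add_nonneg_nonneg)
  finally show ?case
    using step(1) by simp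
qed

lemma eigen_pointwise_bound:
  fixes E d :: "int \<Rightarrow> 'a::{real_normed_field,banach}"
  assumes "l1 E" "rapid_decay d" "\<And>t. of_int t * E t = z * conv d E t"
  shows "(1 + \<bar>real_of_int t\<bar>) ^ R * norm (E t) \<le> (1 + norm z * l1_norm (weighted R d)) ^ R * l1_norm E"
  using norm_le_l1_norm[of "weighted R E" t] eigen_weighted_l1_bound[OF assms, of R R]
  by (simp add: weighted_def)

section \<open>Weights on the lattice\<close>

lemma inorm_nonneg: "inorm \<xi> \<ge> 0"
  unfolding inorm_def by (intro real_sqrt_ge_zero sum_nonneg) auto

lemma inorm_ge_1:
  assumes "\<xi> \<noteq> 0"
  shows "inorm \<xi> \<ge> 1"
proof -
  obtain i where "\<xi> $ i \<noteq> 0"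
    using assms by (metis vec_eq_iff zero_index)
  then have "1 \<le> \<bar>real_of_int (\<xi> $ i)\<bar>"
    by linarith
  then have "1 \<le> (real_of_int (\<xi> $ i))\<^sup>2"
    by (metis abs_le_square_iff abs_one power_one)
  also have "\<dots> \<le> (\<Sum>j\<in>UNIV. (real_of_int (\<xi> $ j))\<^sup>2)"
    by (rule member_le_sum) auto
  finally show ?thesis
    unfolding inorm_def by simp
qed

definition weight :: "int \<times> (int ^ ('n::finite)) \<Rightarrow> real" where
  "weight k = 1 + knorm k"

lemma fst_le_weight: "1 + \<bar>real_of_int (fst k)\<bar> \<le> weight k"
  unfolding weight_def knorm_def by (simp add: real_le_rsqrt)

lemma snd_le_weight: "1 + inorm (snd k) \<le> weight k"
  unfolding weight_def knorm_def by (simp add: real_le_rsqrt)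

lemma weight_ge_1: "weight k \<ge> 1"
  using fst_le_weight[of k] by simp

lemma weight_pos: "weight k > 0"
  using weight_ge_1[of k] by simp

lemma weight_le: "weight k \<le> 1 + \<bar>real_of_int (fst k)\<bar> + inorm (snd k)"
proof -
  have "knorm k \<le> \<bar>real_of_int (fst k)\<bar> + inorm (snd k)"
    unfolding knorm_def
    using real_sqrt_sum_squares_triangle_ineq[of "\<bar>real_of_int (fst k)\<bar>" 0 0 "inorm (snd k)"]
    by (simp add: inorm_nonneg)
  then show ?thesis
    unfolding weight_def by simp
qed

lemma weight_shift: "weight (s, \<xi>) \<le> (1 + \<bar>real_of_int (s - t)\<bar>) * weight (t, \<xi>)"
proof -
  have "knorm (s, \<xi>) \<le> knorm (t, \<xi>) + \<bar>real_of_int (s - t)\<bar>"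
    unfolding knorm_def
    using real_sqrt_sum_squares_triangle_ineq[of "real_of_int t" "real_of_int (s - t)" "inorm \<xi>" 0]
    by simp
  moreover have "0 \<le> \<bar>real_of_int (s - t)\<bar> * knorm (t, \<xi>)"
    unfolding knorm_def by simp
  ultimately show ?thesis
    unfolding weight_def by (simp add: algebra_simps del: of_int_diff)
qed

lemma weight_powr_shift:
  "weight (s, \<xi>) powr r \<le> (1 + \<bar>real_of_int (s - t)\<bar>) powr \<bar>r\<bar> * weight (t, \<xi>) powr r"
proof (cases "r \<ge> 0")
  case True
  then show ?thesis
    using powr_mono2[OF True _ weight_shift[of s \<xi> t]] weight_pos[of "(s, \<xi>)"]
    by (simp add: powr_mult)
next
  case False
  have "weight (t, \<xi>) powr (- r) \<le> ((1 + \<bar>real_of_int (t - s)\<bar>) * weight (s, \<xi>)) powr (- r)"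
    using False weight_pos[of "(t, \<xi>)"] by (intro powr_mono2 weight_shift) auto
  then have "weight (t, \<xi>) powr (- r) \<le> (1 + \<bar>real_of_int (s - t)\<bar>) powr \<bar>r\<bar> * weight (s, \<xi>) powr (- r)"
    using False by (simp add: powr_mult abs_minus_commute)
  then show ?thesis
    using weight_pos[of "(t, \<xi>)"] weight_pos[of "(s, \<xi>)"]
    by (simp add: powr_minus field_simps)
qed

lemma distr_coeffs_iff_weight_power:
  "distr_coeffs u \<longleftrightarrow> (\<exists>C N. \<forall>k. norm (u k) \<le> C * weight k ^ N)"
  unfolding distr_coeffs_def weight_def[symmetric] ..

lemma smooth_coeffs_iff_weight_power:
  "smooth_coeffs u \<longleftrightarrow> (\<forall>N. \<exists>C. \<forall>k. norm (u k) * weight k ^ N \<le> C)"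
proof -
  have "norm (u k) \<le> C / weight k ^ N \<longleftrightarrow> norm (u k) * weight k ^ N \<le> C" for k C N
    using weight_pos[of k] by (simp add: pos_le_divide_eq)
  then show ?thesis
    unfolding smooth_coeffs_def weight_def[symmetric] by simp
qed

definition weight_bounded :: "real \<Rightarrow> ('n::finite) coeffs \<Rightarrow> bool" where
  "weight_bounded r u \<longleftrightarrow> (\<exists>C. \<forall>k. norm (u k) \<le> C * weight k powr r)"

lemma weight_bounded_mono:
  assumes "weight_bounded r u" "r \<le> s"
  shows "weight_bounded s u"
proof -
  obtain C where C: "\<And>k. norm (u k) \<le> C * weight k powr r"
    using assms(1) unfolding weight_bounded_def by blast
  have "norm (u k) \<le> max C 0 * weight k powr s" for k
  proof -
    have "C * weight k powr r \<le> max C 0 * weight k powr r"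
      by (intro mult_right_mono) auto
    also have "\<dots> \<le> max C 0 * weight k powr s"
      using assms(2) weight_ge_1[of k] by (intro mult_left_mono powr_mono) auto
    finally show ?thesis
      using C[of k] by linarith
  qed
  then show ?thesis
    unfolding weight_bounded_def by blast
qed

lemma weight_powr_nat: "weight k powr real N = (1 + knorm k) ^ N"
  using powr_realpow[OF weight_pos] unfolding weight_def by blast

lemma distr_coeffs_iff_weight_bounded:
  "distr_coeffs u \<longleftrightarrow> (\<exists>N::nat. weight_bounded (real N) u)"
  unfolding distr_coeffs_def weight_bounded_def weight_powr_nat by blast

lemma smooth_coeffs_iff_weight_bounded:
  "smooth_coeffs u \<longleftrightarrow> (\<forall>N::nat. weight_bounded (- real N) u)"
  unfolding smooth_coeffs_def weight_bounded_def powr_minus weight_powr_nat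
  by (simp add: divide_inverse)

lemma smooth_coeffs_weight_bounded:
  assumes "smooth_coeffs u"
  shows "weight_bounded r u"
proof (rule weight_bounded_mono)
  show "weight_bounded (- real (nat \<lceil>- r\<rceil>)) u"
    using assms smooth_coeffs_iff_weight_bounded by blast
qed linarith

lemma smooth_coeffs_fiber_l1_bound:
  fixes u :: "('n::finite) coeffs"
  assumes "smooth_coeffs u"
  shows "\<exists>C. \<forall>\<xi>. (\<Sum>\<^sub>\<infinity>t. norm (u (t, \<xi>))) \<le> C / (1 + inorm \<xi>)"
proof -
  obtain C where C: "\<And>k. norm (u k) * weight k ^ 3 \<le> C"
    using assms unfolding smooth_coeffs_iff_weight_power by blast
  define Z where "Z = (\<Sum>\<^sub>\<infinity>t::int. 1 / (1 + \<bar>real_of_int t\<bar>) ^ 2)"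
  have "(\<Sum>\<^sub>\<infinity>t. norm (u (t, \<xi>))) \<le> C * Z / (1 + inorm \<xi>)" for \<xi>
  proof -
    let ?b = "\<lambda>t::int. C / (1 + inorm \<xi>) * (1 / (1 + \<bar>real_of_int t\<bar>) ^ 2)"
    have le: "norm (u (t, \<xi>)) \<le> ?b t" for t
    proof -
      have "(1 + \<bar>real_of_int t\<bar>) ^ 2 * (1 + inorm \<xi>) \<le> weight (t, \<xi>) ^ 2 * weight (t, \<xi>)"
        using fst_le_weight[of "(t, \<xi>)"] snd_le_weight[of "(t, \<xi>)"] inorm_nonneg[of \<xi>]
        by (intro mult_mono power_mono) auto
      then have "norm (u (t, \<xi>)) * ((1 + \<bar>real_of_int t\<bar>) ^ 2 * (1 + inorm \<xi>)) \<le> C"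
        using C[of "(t, \<xi>)"] order_trans[OF mult_left_mono]
        by (metis norm_ge_zero power3_eq_cube power2_eq_square mult.assoc)
      moreover have "0 < (1 + \<bar>real_of_int t\<bar>) ^ 2 * (1 + inorm \<xi>)"
        using inorm_nonneg[of \<xi>] by (intro mult_pos_pos) auto
      ultimately have "norm (u (t, \<xi>)) \<le> C / ((1 + \<bar>real_of_int t\<bar>) ^ 2 * (1 + inorm \<xi>))"
        by (metis pos_le_divide_eq)
      then show ?thesis
        by (simp add: mult.commute)
    qed
    have summable: "?b summable_on UNIV"
      by (rule summable_on_cmult_right[OF summable_on_int_inverse_square])
    have "(\<Sum>\<^sub>\<infinity>t. norm (u (t, \<xi>))) \<le> (\<Sum>\<^sub>\<infinity>t. ?b t)"
      by (rule infsum_mono[OF summable_on_comparison_test[OF summable] summable]) (use le in auto)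
    also have "\<dots> = C * Z / (1 + inorm \<xi>)"
      unfolding Z_def infsum_cmult_right' by simp
    finally show ?thesis .
  qed
  then show ?thesis
    by blast
qed

section \<open>The operators D_t + c(t) p(D_x)\<close>

lemma symbol_polynomial_bound:
  fixes p :: "int ^ ('n::finite) \<Rightarrow> complex"
  assumes "\<exists>C>0. \<forall>\<xi>. \<xi> \<noteq> 0 \<longrightarrow> norm (p \<xi>) \<le> C * inorm \<xi> powr \<nu>"
  shows "\<exists>Cp K. \<forall>\<xi>. norm (p \<xi>) \<le> Cp * (1 + inorm \<xi>) ^ K"
proof -
  obtain C where C: "C > 0" "\<And>\<xi>. \<xi> \<noteq> 0 \<Longrightarrow> norm (p \<xi>) \<le> C * inorm \<xi> powr \<nu>"
    using assms by blast
  define K where "K = nat \<lceil>\<nu>\<rceil>"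
  have "norm (p \<xi>) \<le> (C + norm (p 0)) * (1 + inorm \<xi>) ^ K" for \<xi>
  proof (cases "\<xi> = 0")
    case True
    have "norm (p 0) \<le> (C + norm (p 0)) * 1"
      using C(1) by simp
    also have "\<dots> \<le> (C + norm (p 0)) * (1 + inorm \<xi>) ^ K"
      using C(1) inorm_nonneg[of \<xi>] by (intro mult_left_mono one_le_power) auto
    finally show ?thesis
      using True by simp
  next
    case False
    then have ge_1: "inorm \<xi> \<ge> 1"
      by (rule inorm_ge_1)
    have "inorm \<xi> powr \<nu> \<le> inorm \<xi> powr real K"
      using ge_1 unfolding K_def by (intro powr_mono) linarith+
    also have "\<dots> \<le> (1 + inorm \<xi>) ^ K"
      using ge_1 by (simp add: powr_realpow power_mono)
    finally have "norm (p \<xi>) \<le> C * (1 + inorm \<xi>) ^ K"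
      using C False by (meson less_eq_real_def mult_left_mono order_trans)
    also have "\<dots> \<le> (C + norm (p 0)) * (1 + inorm \<xi>) ^ K"
      using inorm_nonneg[of \<xi>] by (intro mult_right_mono) auto
    finally show ?thesis .
  qed
  then show ?thesis
    by blast
qed

lemma Lop_conv: "Lop c p u (t, \<xi>) = of_int t * u (t, \<xi>) + p \<xi> * conv (fcoef c) (\<lambda>s. u (s, \<xi>)) t"
  by (simp add: Lop_def conv_def)

lemma rapid_decay_conv_bound:
  fixes a b :: "int \<Rightarrow> 'a::{real_normed_field,banach}"
  assumes a: "rapid_decay a" and b: "\<And>s. norm (b s) \<le> B * g s" and "B \<ge> 0"
    and g: "\<And>s. g s \<le> (1 + \<bar>real_of_int (s - t)\<bar>) ^ N * g t"
  shows "norm (conv a b t) \<le> B * l1_norm (weighted N a) * g t"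
proof -
  have summable: "(\<lambda>s. B * g t * weighted N a (t - s)) summable_on UNIV"
    using l1_weighted_rapid_decay[OF a, of N] summable_on_int_reflect[of "weighted N a" t]
    by (intro summable_on_cmult_right) (simp add: l1_nonneg_iff weighted_nonneg)
  have le: "norm (a (t - s) * b s) \<le> B * g t * weighted N a (t - s)" for s
  proof -
    have "norm (b s) \<le> B * ((1 + \<bar>real_of_int (t - s)\<bar>) ^ N * g t)"
      using b[of s] mult_left_mono[OF g[of s] \<open>B \<ge> 0\<close>] by (simp add: abs_minus_commute)
    then have "norm (a (t - s)) * norm (b s) \<le> norm (a (t - s)) * (B * ((1 + \<bar>real_of_int (t - s)\<bar>) ^ N * g t))"
      by (rule mult_left_mono) simp
    then show ?thesis
      unfolding weighted_def norm_mult by (simp add: mult_ac)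
  qed
  have summable_norm: "(\<lambda>s. norm (a (t - s) * b s)) summable_on UNIV"
    by (rule summable_on_comparison_test[OF summable]) (use le in auto)
  have "norm (conv a b t) \<le> (\<Sum>\<^sub>\<infinity>s. norm (a (t - s) * b s))"
    unfolding conv_def by (rule norm_infsum_bound) (use summable_norm in simp)
  also have "\<dots> \<le> (\<Sum>\<^sub>\<infinity>s. B * g t * weighted N a (t - s))"
    by (rule infsum_mono[OF summable_norm summable]) (rule le)
  also have "\<dots> = B * g t * l1_norm (weighted N a)"
    by (simp add: infsum_cmult_right' infsum_int_reflect[of "weighted N a" t] l1_norm_nonneg_eq[OF weighted_nonneg])
  finally show ?thesis
    by (simp add: mult_ac)
qed

lemma fcoef_conv_weight_bound:
  fixes u :: "('n::finite) coeffs"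
  assumes c: "smooth_periodic c" and u: "\<And>k. norm (u k) \<le> C * weight k powr r" and "C \<ge> 0"
  shows "norm (conv (fcoef c) (\<lambda>s. u (s, \<xi>)) t)
    \<le> C * l1_norm (weighted (nat \<lceil>\<bar>r\<bar>\<rceil>) (fcoef c)) * weight (t, \<xi>) powr r"
proof (rule rapid_decay_conv_bound[OF fcoef_rapid_decay[OF c] u \<open>C \<ge> 0\<close>])
  fix s
  let ?N = "nat \<lceil>\<bar>r\<bar>\<rceil>"
  have "(1 + \<bar>real_of_int (s - t)\<bar>) powr \<bar>r\<bar> \<le> (1 + \<bar>real_of_int (s - t)\<bar>) powr real ?N"
    by (intro powr_mono) linarith+
  also have "\<dots> = (1 + \<bar>real_of_int (s - t)\<bar>) ^ ?N"
    by (rule powr_realpow) simp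
  finally have "(1 + \<bar>real_of_int (s - t)\<bar>) powr \<bar>r\<bar> * weight (t, \<xi>) powr r
      \<le> (1 + \<bar>real_of_int (s - t)\<bar>) ^ ?N * weight (t, \<xi>) powr r"
    by (rule mult_right_mono) simp
  then show "weight (s, \<xi>) powr r \<le> (1 + \<bar>real_of_int (s - t)\<bar>) ^ ?N * weight (t, \<xi>) powr r"
    using weight_powr_shift[of s \<xi> r t] by linarith
qed

lemma Lop_weight_bounded:
  fixes p :: "int ^ ('n::finite) \<Rightarrow> complex"
  assumes c: "smooth_periodic c" and p: "\<And>\<xi>. norm (p \<xi>) \<le> Cp * (1 + inorm \<xi>) ^ K"
    and u: "weight_bounded r u"
  shows "weight_bounded (r + K + 1) (Lop c p u)"
proof -
  obtain C where C: "\<And>k. norm (u k) \<le> C * weight k powr r"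
    using u unfolding weight_bounded_def by blast
  have "0 \<le> C * weight (0, 0 :: int ^ 'n) powr r"
    by (rule order_trans[OF norm_ge_zero C])
  moreover have "0 < weight (0, 0 :: int ^ 'n) powr r"
    using weight_pos[of "(0, 0 :: int ^ 'n)"] by simp
  ultimately have C_nonneg: "C \<ge> 0"
    by (simp add: zero_le_mult_iff)
  have "norm (p 0) \<le> Cp"
    using p[of 0] by (simp add: inorm_def)
  then have Cp_nonneg: "Cp \<ge> 0"
    by (rule order_trans[OF norm_ge_zero])
  define A where "A = l1_norm (weighted (nat \<lceil>\<bar>r\<bar>\<rceil>) (fcoef c))"
  have bound: "norm (Lop c p u (t, \<xi>)) \<le> (C + Cp * C * A) * weight (t, \<xi>) powr (r + K + 1)" for t \<xi>
  proof -
    let ?W = "weight (t, \<xi>)"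
    have W_ge_1: "?W \<ge> 1"
      by (rule weight_ge_1)
    have "norm (of_int t * u (t, \<xi>)) \<le> ?W * (C * ?W powr r)"
      unfolding norm_mult using fst_le_weight[of "(t, \<xi>)"] C[of "(t, \<xi>)"]
      by (intro mult_mono) auto
    also have "\<dots> = C * ?W powr (r + 1)"
      using W_ge_1 by (simp add: powr_add)
    also have "\<dots> \<le> C * ?W powr (r + K + 1)"
      using W_ge_1 C_nonneg by (intro mult_left_mono powr_mono) auto
    finally have first: "norm (of_int t * u (t, \<xi>)) \<le> C * ?W powr (r + K + 1)" .
    have "norm (p \<xi>) \<le> Cp * (1 + inorm \<xi>) ^ K"
      by (rule p)
    also have "\<dots> \<le> Cp * ?W ^ K"
      using snd_le_weight[of "(t, \<xi>)"] inorm_nonneg[of \<xi>] Cp_nonneg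
      by (intro mult_left_mono power_mono) auto
    finally have "norm (p \<xi> * conv (fcoef c) (\<lambda>s. u (s, \<xi>)) t) \<le> Cp * ?W powr K * (C * A * ?W powr r)"
      unfolding norm_mult A_def using fcoef_conv_weight_bound[OF c C C_nonneg] weight_pos[of "(t, \<xi>)"] Cp_nonneg
      by (intro mult_mono) (auto simp: powr_realpow)
    also have "\<dots> = Cp * C * A * ?W powr (r + K)"
      using W_ge_1 by (simp add: powr_add mult_ac)
    also have "\<dots> \<le> Cp * C * A * ?W powr (r + K + 1)"
      using W_ge_1 Cp_nonneg C_nonneg l1_norm_nonneg unfolding A_def
      by (intro mult_left_mono powr_mono mult_nonneg_nonneg) auto
    finally have second: "norm (p \<xi> * conv (fcoef c) (\<lambda>s. u (s, \<xi>)) t) \<le> Cp * C * A * ?W powr (r + K + 1)" .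
    show ?thesis
      unfolding Lop_conv using norm_triangle_le[OF add_mono[OF first second]]
      by (simp add: distrib_right)
  qed
  have "norm (Lop c p u k) \<le> (C + Cp * C * A) * weight k powr (r + K + 1)" for k
    using bound by (cases k) simp
  then show ?thesis
    unfolding weight_bounded_def by blast
qed

lemma Lop_distr_coeffs:
  fixes p :: "int ^ ('n::finite) \<Rightarrow> complex"
  assumes "smooth_periodic c" "\<And>\<xi>. norm (p \<xi>) \<le> Cp * (1 + inorm \<xi>) ^ K" "distr_coeffs u"
  shows "distr_coeffs (Lop c p u)"
proof -
  obtain N where "weight_bounded (real N) u"
    using assms(3) distr_coeffs_iff_weight_bounded by blast
  from Lop_weight_bounded[OF assms(1,2) this] have "weight_bounded (real (N + K + 1)) (Lop c p u)"
    by (simp add: add_ac)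
  then show ?thesis
    using distr_coeffs_iff_weight_bounded by blast
qed

lemma Lop_smooth_coeffs:
  fixes p :: "int ^ ('n::finite) \<Rightarrow> complex"
  assumes "smooth_periodic c" "\<And>\<xi>. norm (p \<xi>) \<le> Cp * (1 + inorm \<xi>) ^ K" "smooth_coeffs u"
  shows "smooth_coeffs (Lop c p u)"
  unfolding smooth_coeffs_iff_weight_bounded
proof
  fix N :: nat
  have "weight_bounded (- real N - K - 1) u"
    by (rule smooth_coeffs_weight_bounded[OF assms(3)])
  from Lop_weight_bounded[OF assms(1,2) this] show "weight_bounded (- real N) (Lop c p u)"
    by simp
qed

lemma smooth_periodic_const: "smooth_periodic (\<lambda>_. a)"
  unfolding smooth_periodic_def
proof (intro conjI exI[of _ "\<lambda>n. if n = 0 then (\<lambda>_. a) else (\<lambda>_. 0)"] allI)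
  show "((if k = 0 then \<lambda>_. a else (\<lambda>_. 0)) has_vector_derivative
      (if Suc k = 0 then \<lambda>_. a else (\<lambda>_. 0)) t) (at t)" for k t
    by (auto intro: has_vector_derivative_const)
qed simp_all

lemma Lop_const: "Lop (\<lambda>_. a) p u (t, \<xi>) = (of_int t + p \<xi> * a) * u (t, \<xi>)"
proof -
  have "conv (fcoef (\<lambda>_. a)) (\<lambda>s. u (s, \<xi>)) t = a * u (t, \<xi>)"
    unfolding conv_def by (subst infsum_single_nonzero[where t = t]) (auto simp: fcoef_const)
  then show ?thesis
    unfolding Lop_conv by (simp add: algebra_simps)
qed

text \<open>\<open>E q\<close> is the normalised coefficient sequence of \<open>exp (- q \<Gamma>)\<close>, where \<open>\<Gamma>\<close> is the
  periodic function with coefficients \<open>C\<close>, i.e. \<open>D\<^sub>t \<Gamma> = c - c\<^sub>0\<close>.\<close>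

lemma smooth_periodic_eigen_sequences:
  assumes c: "smooth_periodic c"
  obtains E :: "complex \<Rightarrow> int \<Rightarrow> complex"
  where "\<And>q. l1 (E q)" and "\<And>q. l1_norm (E q) = 1"
    and "\<And>q t. of_int t * E q t + q * conv (fcoef c) (E q) t = q * fcoef c 0 * E q t"
    and "\<And>R. \<exists>A\<ge>0. \<forall>q t. (1 + \<bar>real_of_int t\<bar>) ^ R * norm (E q t) \<le> (1 + norm q * A) ^ R"
proof -
  define c0 where "c0 = fcoef c 0"
  define d where "d k = (if k = 0 then 0 else fcoef c k)" for k
  define C where "C k = (if k = 0 then 0 else fcoef c k / of_int k)" for k
  have rapid_c: "rapid_decay (fcoef c)"
    by (rule fcoef_rapid_decay[OF c])
  have rapid_d: "rapid_decay d"
    by (rule rapid_decay_mono[OF rapid_c]) (simp add: d_def)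
  have "norm (C k) \<le> norm (fcoef c k)" for k
  proof (cases "k = 0")
    case False
    then have "1 \<le> norm (of_int k :: complex)"
      by (simp add: norm_of_int)
    then have "norm (fcoef c k) / norm (of_int k :: complex) \<le> norm (fcoef c k) / 1"
      by (intro divide_left_mono) auto
    then show ?thesis
      using False by (simp add: C_def norm_divide)
  qed (simp add: C_def)
  then have l1_C: "l1 C"
    by (intro l1_rapid_decay rapid_decay_mono[OF rapid_c])
  have Cd: "of_int k * C k = d k" for k
    by (simp add: C_def d_def)
  have "\<forall>q. \<exists>E. l1 E \<and> l1_norm E = 1 \<and> (\<forall>t. of_int t * E t = - q * conv d E t)"
    using normalized_conv_exp_eigen[OF l1_C l1_rapid_decay[OF rapid_d] Cd] by blast
  then obtain E where l1_E: "\<And>q. l1 (E q)" and norm_E: "\<And>q. l1_norm (E q) = 1"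
    and eigen: "\<And>q t. of_int t * E q t = - q * conv d (E q) t"
    by metis
  have "fcoef c = (\<lambda>k. d k + c0 * dirac k)"
    by (rule ext) (simp add: c0_def d_def dirac_def)
  then have "conv (fcoef c) (E q) t = conv d (E q) t + c0 * E q t" for q t
    using conv_add_left[OF l1_rapid_decay[OF rapid_d] l1_cmult[OF l1_dirac] l1_E]
    by (simp add: conv_cmult_left conv_dirac_left)
  then have "of_int t * E q t + q * conv (fcoef c) (E q) t = q * fcoef c 0 * E q t" for q t
    unfolding eigen c0_def[symmetric] by (simp add: algebra_simps)
  moreover have "(1 + \<bar>real_of_int t\<bar>) ^ R * norm (E q t) \<le> (1 + norm q * l1_norm (weighted R d)) ^ R" for R q t
    using eigen_pointwise_bound[OF l1_E rapid_d eigen, of t R] by (simp add: norm_E)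
  ultimately show ?thesis
    using that l1_E norm_E l1_norm_nonneg by blast
qed

lemma Lop_wave_packets:
  assumes eigen: "\<And>q t. of_int t * E q t + q * conv (fcoef c) (E q) t = q * fcoef c 0 * E q t"
  shows "Lop c p (\<lambda>(\<tau>, \<xi>). if \<xi> \<in> \<Xi> then E (p \<xi>) (\<tau> - \<tau>0 \<xi>) else 0)
    = (\<lambda>(\<tau>, \<xi>). if \<xi> \<in> \<Xi> then (of_int (\<tau>0 \<xi>) + p \<xi> * fcoef c 0) * E (p \<xi>) (\<tau> - \<tau>0 \<xi>) else 0)"
proof (intro ext, clarify)
  fix \<tau> \<xi>
  let ?s = "\<tau>0 \<xi>" and ?E = "E (p \<xi>)"
  show "Lop c p (\<lambda>(\<tau>, \<xi>). if \<xi> \<in> \<Xi> then E (p \<xi>) (\<tau> - \<tau>0 \<xi>) else 0) (\<tau>, \<xi>)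
    = (if \<xi> \<in> \<Xi> then (of_int ?s + p \<xi> * fcoef c 0) * ?E (\<tau> - ?s) else 0)"
  proof (cases "\<xi> \<in> \<Xi>")
    case True
    then have "Lop c p (\<lambda>(\<tau>, \<xi>). if \<xi> \<in> \<Xi> then E (p \<xi>) (\<tau> - \<tau>0 \<xi>) else 0) (\<tau>, \<xi>)
        = of_int \<tau> * ?E (\<tau> - ?s) + p \<xi> * conv (fcoef c) ?E (\<tau> - ?s)"
      by (simp add: Lop_conv conv_shift_right)
    also have "\<dots> = (of_int (\<tau> - ?s) * ?E (\<tau> - ?s) + p \<xi> * conv (fcoef c) ?E (\<tau> - ?s)) + of_int ?s * ?E (\<tau> - ?s)"
      by (simp add: algebra_simps)
    also have "\<dots> = (of_int ?s + p \<xi> * fcoef c 0) * ?E (\<tau> - ?s)"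
      unfolding eigen by (simp add: algebra_simps)
    finally show ?thesis
      using True by simp
  qed (simp add: Lop_conv conv_def)
qed

section \<open>From variable to constant coefficients\<close>

lemma multiplier_decays_where_large:
  fixes \<sigma> u :: "('n::finite) coeffs"
  assumes "smooth_coeffs (\<lambda>k. \<sigma> k * u k)"
  shows "\<exists>C. \<forall>k. 1 \<le> norm (u k) * weight k ^ N0 \<longrightarrow> norm (\<sigma> k) * weight k ^ N \<le> C"
proof -
  obtain C where C: "\<And>k. norm (\<sigma> k * u k) * weight k ^ (N + N0) \<le> C"
    using assms unfolding smooth_coeffs_iff_weight_power by blast
  have "norm (\<sigma> k) * weight k ^ N \<le> C" if "1 \<le> norm (u k) * weight k ^ N0" for k
  proof -
    have "norm (\<sigma> k) * weight k ^ N = norm (\<sigma> k) * weight k ^ N * 1"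
      by simp
    also have "\<dots> \<le> norm (\<sigma> k) * weight k ^ N * (norm (u k) * weight k ^ N0)"
      using that weight_pos[of k] by (intro mult_left_mono) auto
    also have "\<dots> = norm (\<sigma> k * u k) * weight k ^ (N + N0)"
      by (simp add: norm_mult power_add mult_ac)
    finally show ?thesis
      using C[of k] by linarith
  qed
  then show ?thesis
    by blast
qed

lemma large_set_unbounded:
  fixes g :: "int ^ ('n::finite) \<Rightarrow> complex" and u :: "'n coeffs"
  assumes g: "\<And>\<xi>. norm (g \<xi>) \<le> G * (1 + inorm \<xi>) ^ K" and u: "distr_coeffs u"
    and not_decaying: "\<And>C. \<exists>k. C < norm (u k) * weight k ^ N0"
    and bounded_symbol: "\<And>k. 1 \<le> norm (u k) * weight k ^ N0 \<Longrightarrow> norm (of_int (fst k) + g (snd k)) \<le> C1"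
  shows "\<exists>k. 1 \<le> norm (u k) * weight k ^ N0 \<and> B < inorm (snd k)"
proof (rule ccontr)
  let ?S = "{k. 1 \<le> norm (u k) * weight k ^ N0}"
  assume "\<nexists>k. 1 \<le> norm (u k) * weight k ^ N0 \<and> B < inorm (snd k)"
  then have bounded: "\<And>k. k \<in> ?S \<Longrightarrow> inorm (snd k) \<le> B"
    by (meson mem_Collect_eq not_le)
  obtain C0 N1 where C0: "\<And>k. norm (u k) \<le> C0 * weight k ^ N1"
    using u unfolding distr_coeffs_iff_weight_power by blast
  have "0 \<le> C0 * weight (0, 0 :: int ^ 'n) ^ N1"
    by (rule order_trans[OF norm_ge_zero C0])
  then have C0_nonneg: "C0 \<ge> 0"
    using zero_less_power[OF weight_pos, of "(0, 0 :: int ^ 'n)" N1] by (simp add: zero_le_mult_iff)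
  have "norm (g 0) \<le> G"
    using g[of 0] by (simp add: inorm_def)
  then have G_nonneg: "0 \<le> G"
    by (rule order_trans[OF norm_ge_zero])
  define W where "W = 1 + (C1 + G * (1 + B) ^ K) + B"
  have W: "weight k \<le> W" if "k \<in> ?S" for k
  proof -
    have "(1 + inorm (snd k)) ^ K \<le> (1 + B) ^ K"
      using bounded[OF that] inorm_nonneg[of "snd k"] by (intro power_mono) auto
    then have "norm (g (snd k)) \<le> G * (1 + B) ^ K"
      by (rule order_trans[OF g mult_left_mono[OF _ G_nonneg]])
    moreover have "\<bar>real_of_int (fst k)\<bar> \<le> norm (of_int (fst k) + g (snd k)) + norm (g (snd k))"
      using norm_triangle_ineq4[of "of_int (fst k) + g (snd k)" "g (snd k)"] by (simp add: norm_of_int)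
    moreover have "norm (of_int (fst k) + g (snd k)) \<le> C1"
      using bounded_symbol that by simp
    ultimately show ?thesis
      unfolding W_def using weight_le[of k] bounded[OF that] by linarith
  qed
  have "norm (u k) * weight k ^ N0 \<le> max 1 (C0 * W ^ (N1 + N0))" for k
  proof (cases "k \<in> ?S")
    case True
    have "norm (u k) * weight k ^ N0 \<le> C0 * weight k ^ N1 * weight k ^ N0"
      using weight_pos[of k] by (intro mult_right_mono C0) simp
    also have "\<dots> = C0 * weight k ^ (N1 + N0)"
      by (simp add: power_add)
    also have "\<dots> \<le> C0 * W ^ (N1 + N0)"
      using W[OF True] weight_pos[of k] C0_nonneg by (intro mult_left_mono power_mono) auto
    finally show ?thesis
      by linarith
  next
    case False
    then show ?thesis
      by auto
  qed
  then show False
    using not_decaying by (meson not_le)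
qed

lemma multiplier_rapid_decay_points:
  fixes g :: "int ^ ('n::finite) \<Rightarrow> complex" and u :: "'n coeffs"
  assumes g: "\<And>\<xi>. norm (g \<xi>) \<le> G * (1 + inorm \<xi>) ^ K"
    and u: "distr_coeffs u" "\<not> smooth_coeffs u"
    and smooth: "smooth_coeffs (\<lambda>k. (of_int (fst k) + g (snd k)) * u k)"
  obtains \<Xi> \<tau>0 where "\<And>B. \<exists>\<xi>\<in>\<Xi>. B < inorm \<xi>"
    and "\<And>N. \<exists>C. \<forall>\<xi>\<in>\<Xi>. norm (of_int (\<tau>0 \<xi>) + g \<xi>) * weight (\<tau>0 \<xi>, \<xi>) ^ N \<le> C"
proof -
  obtain N0 where N0: "\<And>C. \<exists>k. C < norm (u k) * weight k ^ N0"
    using u(2) unfolding smooth_coeffs_iff_weight_power by (meson not_le)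
  define S where "S = {k. 1 \<le> norm (u k) * weight k ^ N0}"
  have decay: "\<exists>C. \<forall>k\<in>S. norm (of_int (fst k) + g (snd k)) * weight k ^ N \<le> C" for N
    using multiplier_decays_where_large[OF smooth, of N0 N] unfolding S_def by simp
  obtain C1 where "\<And>k. k \<in> S \<Longrightarrow> norm (of_int (fst k) + g (snd k)) \<le> C1"
    using decay[of 0] by auto
  then have unbounded: "\<exists>k\<in>S. B < inorm (snd k)" for B
    using large_set_unbounded[OF g u(1) N0, of C1 B] unfolding S_def by blast
  define \<tau>0 where "\<tau>0 \<xi> = (SOME \<tau>. (\<tau>, \<xi>) \<in> S)" for \<xi>
  have \<tau>0: "(\<tau>0 \<xi>, \<xi>) \<in> S" if "\<xi> \<in> snd ` S" for \<xi>
    unfolding \<tau>0_def by (rule someI_ex) (use that in force)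
  show ?thesis
  proof (rule that[of "snd ` S" \<tau>0])
    show "\<exists>\<xi>\<in>snd ` S. B < inorm \<xi>" for B
      using unbounded[of B] by blast
    show "\<exists>C. \<forall>\<xi>\<in>snd ` S. norm (of_int (\<tau>0 \<xi>) + g \<xi>) * weight (\<tau>0 \<xi>, \<xi>) ^ N \<le> C" for N
      using decay[of N] \<tau>0 by fastforce
  qed
qed

lemma shifted_eigen_weight_bound:
  assumes A: "A \<ge> 0" "\<And>t. (1 + \<bar>real_of_int t\<bar>) ^ N * norm (e t) \<le> (1 + norm q * A) ^ N"
    and q: "norm q \<le> B * weight (s, \<xi>) ^ K" and "B \<ge> 0"
  shows "norm (e (\<tau> - s)) * weight (\<tau>, \<xi>) ^ N \<le> (1 + B * A) ^ N * weight (s, \<xi>) ^ (N + K * N)"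
proof -
  let ?W = "weight (s, \<xi>)"
  have "1 + norm q * A \<le> (1 + B * A) * ?W ^ K"
  proof -
    have "norm q * A \<le> B * ?W ^ K * A"
      by (rule mult_right_mono[OF q A(1)])
    moreover have "1 \<le> ?W ^ K"
      using weight_ge_1 by (rule one_le_power)
    moreover have "(1 + B * A) * ?W ^ K = ?W ^ K + B * ?W ^ K * A"
      by (simp add: algebra_simps)
    ultimately show ?thesis
      by linarith
  qed
  then have E_bound: "(1 + \<bar>real_of_int (\<tau> - s)\<bar>) ^ N * norm (e (\<tau> - s)) \<le> ((1 + B * A) * ?W ^ K) ^ N"
    using A \<open>B \<ge> 0\<close> by (intro order_trans[OF A(2)] power_mono) auto
  have shift: "weight (\<tau>, \<xi>) ^ N \<le> (1 + \<bar>real_of_int (\<tau> - s)\<bar>) ^ N * ?W ^ N"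
    using power_mono[OF weight_shift[of \<tau> \<xi> s], of N] weight_pos[of "(\<tau>, \<xi>)"]
    by (simp add: power_mult_distrib)
  have "norm (e (\<tau> - s)) * weight (\<tau>, \<xi>) ^ N
      \<le> norm (e (\<tau> - s)) * ((1 + \<bar>real_of_int (\<tau> - s)\<bar>) ^ N * ?W ^ N)"
    by (rule mult_left_mono[OF shift norm_ge_zero])
  also have "\<dots> = (1 + \<bar>real_of_int (\<tau> - s)\<bar>) ^ N * norm (e (\<tau> - s)) * ?W ^ N"
    by (simp add: mult_ac)
  also have "\<dots> \<le> ((1 + B * A) * ?W ^ K) ^ N * ?W ^ N"
    using weight_pos[of "(s, \<xi>)"] by (intro mult_right_mono[OF E_bound]) simp
  also have "\<dots> = (1 + B * A) ^ N * ?W ^ (N + K * N)"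
    by (simp add: power_mult_distrib power_add power_mult mult_ac)
  finally show ?thesis .
qed

lemma smooth_coeffs_wave_packets:
  fixes p :: "int ^ ('n::finite) \<Rightarrow> complex" and \<sigma> :: "int \<Rightarrow> int ^ 'n \<Rightarrow> complex"
  assumes decay: "\<And>N. \<exists>C. \<forall>\<xi>\<in>\<Xi>. norm (\<sigma> (\<tau>0 \<xi>) \<xi>) * weight (\<tau>0 \<xi>, \<xi>) ^ N \<le> C"
    and E: "\<And>R. \<exists>A\<ge>0. \<forall>q t. (1 + \<bar>real_of_int t\<bar>) ^ R * norm (E q t) \<le> (1 + norm q * A) ^ R"
    and p: "\<And>\<xi>. norm (p \<xi>) \<le> Cp * (1 + inorm \<xi>) ^ K"
  shows "smooth_coeffs (\<lambda>(\<tau>, \<xi>). if \<xi> \<in> \<Xi> then \<sigma> (\<tau>0 \<xi>) \<xi> * E (p \<xi>) (\<tau> - \<tau>0 \<xi>) else 0)"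
  unfolding smooth_coeffs_iff_weight_power
proof
  fix N
  obtain A where A: "A \<ge> 0" "\<And>q t. (1 + \<bar>real_of_int t\<bar>) ^ N * norm (E q t) \<le> (1 + norm q * A) ^ N"
    using E by blast
  obtain Cs where Cs: "\<And>\<xi>. \<xi> \<in> \<Xi> \<Longrightarrow> norm (\<sigma> (\<tau>0 \<xi>) \<xi>) * weight (\<tau>0 \<xi>, \<xi>) ^ (N + K * N) \<le> Cs"
    using decay by blast
  have "norm (p 0) \<le> Cp"
    using p[of 0] by (simp add: inorm_def)
  then have Cp_nonneg: "Cp \<ge> 0"
    by (rule order_trans[OF norm_ge_zero])
  have bound: "norm (\<sigma> (\<tau>0 \<xi>) \<xi> * E (p \<xi>) (\<tau> - \<tau>0 \<xi>)) * weight (\<tau>, \<xi>) ^ N \<le> (1 + Cp * A) ^ N * Cs"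
    if \<xi>: "\<xi> \<in> \<Xi>" for \<tau> \<xi>
  proof -
    have "norm (p \<xi>) \<le> Cp * (1 + inorm \<xi>) ^ K"
      by (rule p)
    also have "\<dots> \<le> Cp * weight (\<tau>0 \<xi>, \<xi>) ^ K"
      using snd_le_weight[of "(\<tau>0 \<xi>, \<xi>)"] inorm_nonneg[of \<xi>] Cp_nonneg
      by (intro mult_left_mono power_mono) auto
    finally have q: "norm (p \<xi>) \<le> Cp * weight (\<tau>0 \<xi>, \<xi>) ^ K" .
    have packet: "norm (E (p \<xi>) (\<tau> - \<tau>0 \<xi>)) * weight (\<tau>, \<xi>) ^ N
        \<le> (1 + Cp * A) ^ N * weight (\<tau>0 \<xi>, \<xi>) ^ (N + K * N)"
      using shifted_eigen_weight_bound[where e = "E (p \<xi>)", OF A(1) A(2) q Cp_nonneg] .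
    have "norm (\<sigma> (\<tau>0 \<xi>) \<xi> * E (p \<xi>) (\<tau> - \<tau>0 \<xi>)) * weight (\<tau>, \<xi>) ^ N
        = norm (\<sigma> (\<tau>0 \<xi>) \<xi>) * (norm (E (p \<xi>) (\<tau> - \<tau>0 \<xi>)) * weight (\<tau>, \<xi>) ^ N)"
      by (simp add: norm_mult mult_ac)
    also have "\<dots> \<le> norm (\<sigma> (\<tau>0 \<xi>) \<xi>) * ((1 + Cp * A) ^ N * weight (\<tau>0 \<xi>, \<xi>) ^ (N + K * N))"
      by (rule mult_left_mono[OF packet norm_ge_zero])
    also have "\<dots> = (1 + Cp * A) ^ N * (norm (\<sigma> (\<tau>0 \<xi>) \<xi>) * weight (\<tau>0 \<xi>, \<xi>) ^ (N + K * N))"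
      by (simp add: mult_ac)
    also have "\<dots> \<le> (1 + Cp * A) ^ N * Cs"
      using Cs[OF \<xi>] Cp_nonneg A(1) by (intro mult_left_mono) auto
    finally show ?thesis .
  qed
  show "\<exists>C. \<forall>k. norm (case k of (\<tau>, \<xi>) \<Rightarrow> if \<xi> \<in> \<Xi> then \<sigma> (\<tau>0 \<xi>) \<xi> * E (p \<xi>) (\<tau> - \<tau>0 \<xi>) else 0)
      * weight k ^ N \<le> C"
  proof (intro exI allI)
    fix k :: "int \<times> (int ^ 'n)"
    obtain \<tau> \<xi> where k: "k = (\<tau>, \<xi>)"
      by (cases k)
    show "norm (case k of (\<tau>, \<xi>) \<Rightarrow> if \<xi> \<in> \<Xi> then \<sigma> (\<tau>0 \<xi>) \<xi> * E (p \<xi>) (\<tau> - \<tau>0 \<xi>) else 0)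
      * weight k ^ N \<le> max 0 ((1 + Cp * A) ^ N * Cs)"
      using bound[of \<xi> \<tau>] by (cases "\<xi> \<in> \<Xi>") (simp_all add: k)
  qed
qed

lemma Lop_hypoelliptic_imp_const_coeff_hypoelliptic:
  fixes p :: "int ^ ('n::finite) \<Rightarrow> complex"
  assumes c: "smooth_periodic c" and p: "\<And>\<xi>. norm (p \<xi>) \<le> Cp * (1 + inorm \<xi>) ^ K"
    and hypoelliptic: "glob_hypoelliptic (Lop c p)"
  shows "glob_hypoelliptic (Lop (\<lambda>_. fcoef c 0) p)"
  unfolding glob_hypoelliptic_def
proof (intro allI impI)
  fix u :: "'n coeffs"
  assume "distr_coeffs u \<and> smooth_coeffs (Lop (\<lambda>_. fcoef c 0) p u)"
  moreover have "Lop (\<lambda>_. fcoef c 0) p u = (\<lambda>k. (of_int (fst k) + p (snd k) * fcoef c 0) * u k)"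
    by (auto simp: fun_eq_iff Lop_const)
  ultimately have u: "distr_coeffs u" "smooth_coeffs (\<lambda>k. (of_int (fst k) + p (snd k) * fcoef c 0) * u k)"
    by auto
  show "smooth_coeffs u"
  proof (rule ccontr)
    assume "\<not> smooth_coeffs u"
    moreover have "norm (p \<xi> * fcoef c 0) \<le> Cp * norm (fcoef c 0) * (1 + inorm \<xi>) ^ K" for \<xi>
      using mult_right_mono[OF p norm_ge_zero, of \<xi> "fcoef c 0"] by (simp add: norm_mult mult_ac)
    ultimately obtain \<Xi> \<tau>0 where unbounded: "\<And>B. \<exists>\<xi>\<in>\<Xi>. B < inorm \<xi>"
      and decay: "\<And>N. \<exists>C. \<forall>\<xi>\<in>\<Xi>. norm (of_int (\<tau>0 \<xi>) + p \<xi> * fcoef c 0) * weight (\<tau>0 \<xi>, \<xi>) ^ N \<le> C"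
      using multiplier_rapid_decay_points[where g = "\<lambda>\<xi>. p \<xi> * fcoef c 0"] u by blast
    obtain E where l1_E: "\<And>q. l1 (E q)" and norm_E: "\<And>q. l1_norm (E q) = 1"
      and eigen: "\<And>q t. of_int t * E q t + q * conv (fcoef c) (E q) t = q * fcoef c 0 * E q t"
      and E_bound: "\<And>R. \<exists>A\<ge>0. \<forall>q t. (1 + \<bar>real_of_int t\<bar>) ^ R * norm (E q t) \<le> (1 + norm q * A) ^ R"
      using smooth_periodic_eigen_sequences[OF c] by blast
    define U where "U = (\<lambda>(\<tau>, \<xi>). if \<xi> \<in> \<Xi> then E (p \<xi>) (\<tau> - \<tau>0 \<xi>) else 0)"
    have "distr_coeffs U"
      unfolding distr_coeffs_iff_weight_power
      using norm_le_l1_norm[OF l1_E] norm_E by (intro exI[of _ 1] exI[of _ 0]) (simp add: U_def split: prod.split)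
    moreover have "smooth_coeffs (Lop c p U)"
      unfolding U_def Lop_wave_packets[OF eigen]
      using smooth_coeffs_wave_packets[OF _ E_bound p, of \<Xi> "\<lambda>s \<xi>. of_int s + p \<xi> * fcoef c 0" \<tau>0] decay
      by simp
    ultimately have "smooth_coeffs U"
      using hypoelliptic unfolding glob_hypoelliptic_def by blast
    then obtain C where C: "\<And>\<xi>. (\<Sum>\<^sub>\<infinity>\<tau>. norm (U (\<tau>, \<xi>))) \<le> C / (1 + inorm \<xi>)"
      using smooth_coeffs_fiber_l1_bound by blast
    obtain \<xi> where "\<xi> \<in> \<Xi>" and "C < inorm \<xi>"
      using unbounded by blast
    then have "(\<Sum>\<^sub>\<infinity>\<tau>. norm (U (\<tau>, \<xi>))) = 1"
      using infsum_int_shift[of "\<lambda>t. norm (E (p \<xi>) t)" "- \<tau>0 \<xi>"] norm_E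
      by (simp add: U_def l1_norm_def)
    then have "1 + inorm \<xi> \<le> C"
      using C[of \<xi>] inorm_nonneg[of \<xi>] by (simp add: le_divide_eq split: if_splits)
    then show False
      using \<open>C < inorm \<xi>\<close> by linarith
  qed
qed

lemma Lop_properties:
  fixes p :: "int ^ ('n::finite) \<Rightarrow> complex"
  assumes c: "smooth_periodic c" and p: "\<exists>C>0. \<forall>\<xi>. \<xi> \<noteq> 0 \<longrightarrow> norm (p \<xi>) \<le> C * inorm \<xi> powr \<nu>"
  shows "distr_coeffs u \<Longrightarrow> distr_coeffs (Lop c p u)"
    and "smooth_coeffs u \<Longrightarrow> smooth_coeffs (Lop c p u)"
    and "distr_coeffs u \<Longrightarrow> distr_coeffs (Lop (\<lambda>_. fcoef c 0) p u)"
    and "glob_hypoelliptic (Lop c p) \<Longrightarrow> glob_hypoelliptic (Lop (\<lambda>_. fcoef c 0) p)"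
proof -
  obtain Cp K where pb: "\<And>\<xi>. norm (p \<xi>) \<le> Cp * (1 + inorm \<xi>) ^ K"
    using symbol_polynomial_bound[OF p] by blast
  show "distr_coeffs u \<Longrightarrow> distr_coeffs (Lop c p u)"
    by (rule Lop_distr_coeffs[OF c pb])
  show "smooth_coeffs u \<Longrightarrow> smooth_coeffs (Lop c p u)"
    by (rule Lop_smooth_coeffs[OF c pb])
  show "distr_coeffs u \<Longrightarrow> distr_coeffs (Lop (\<lambda>_. fcoef c 0) p u)"
    by (rule Lop_distr_coeffs[OF smooth_periodic_const pb])
  show "glob_hypoelliptic (Lop c p) \<Longrightarrow> glob_hypoelliptic (Lop (\<lambda>_. fcoef c 0) p)"
    by (rule Lop_hypoelliptic_imp_const_coeff_hypoelliptic[OF c pb])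
qed

section \<open>Products of commuting operators\<close>

lemma Lprod_preserves:
  assumes "\<And>j u. j \<in> {1..m} \<Longrightarrow> P u \<Longrightarrow> P (L j u)" and "P u"
  shows "P (Lprod L m u)"
  using assms
proof (induction m arbitrary: u)
  case (Suc m)
  have "P (L (Suc m) u)"
    by (rule Suc.prems(1)) (simp_all add: Suc.prems(2))
  moreover have "\<And>j u. j \<in> {1..m} \<Longrightarrow> P u \<Longrightarrow> P (L j u)"
    using Suc.prems(1) by simp
  ultimately show ?case
    using Suc.IH by simp
qed simp

lemma glob_hypoelliptic_Lprod:
  fixes L :: "nat \<Rightarrow> ('n::finite) coeffs \<Rightarrow> 'n coeffs"
  assumes "\<And>j. j \<in> {1..m} \<Longrightarrow> glob_hypoelliptic (L j)"
    and "\<And>j u. j \<in> {1..m} \<Longrightarrow> distr_coeffs u \<Longrightarrow> distr_coeffs (L j u)"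
  shows "glob_hypoelliptic (Lprod L m)"
  using assms
proof (induction m)
  case 0
  then show ?case
    by (simp add: glob_hypoelliptic_def)
next
  case (Suc m)
  have IH: "glob_hypoelliptic (Lprod L m)"
    using Suc by simp
  have last: "glob_hypoelliptic (L (Suc m))"
    using Suc.prems(1) by simp
  show ?case
    unfolding glob_hypoelliptic_def
  proof (intro allI impI)
    fix u
    assume u: "distr_coeffs u \<and> smooth_coeffs (Lprod L (Suc m) u)"
    then have "distr_coeffs (L (Suc m) u)" and "smooth_coeffs (Lprod L m (L (Suc m) u))"
      using Suc.prems(2)[of "Suc m" u] by auto
    then have "smooth_coeffs (L (Suc m) u)"
      using IH unfolding glob_hypoelliptic_def by blast
    then show "smooth_coeffs u"
      using last u unfolding glob_hypoelliptic_def by blast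
  qed
qed

lemma Lprod_factor:
  fixes L :: "nat \<Rightarrow> ('n::finite) coeffs \<Rightarrow> 'n coeffs"
  assumes "\<And>j u. j \<in> {1..m} \<Longrightarrow> distr_coeffs u \<Longrightarrow> distr_coeffs (L j u)"
    and "\<And>j u. j \<in> {1..m} \<Longrightarrow> smooth_coeffs u \<Longrightarrow> smooth_coeffs (L j u)"
    and "\<And>j u. j \<in> {1..m} \<Longrightarrow> distr_coeffs u \<Longrightarrow> L j (L k u) = L k (L j u)"
    and "k \<in> {1..m}"
  shows "\<exists>Q. (\<forall>v. smooth_coeffs v \<longrightarrow> smooth_coeffs (Q v)) \<and>
      (\<forall>u. distr_coeffs u \<longrightarrow> Lprod L m u = Q (L k u))"
  using assms
proof (induction m)
  case 0
  then show ?case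
    by simp
next
  case (Suc m)
  show ?case
  proof (cases "k = Suc m")
    case True
    have "smooth_coeffs (Lprod L m v)" if "smooth_coeffs v" for v
      using Lprod_preserves[of m smooth_coeffs L v] Suc.prems(2) that by simp
    then show ?thesis
      using True by (intro exI[of _ "Lprod L m"]) simp
  next
    case False
    have "k \<in> {1..m}"
      using False Suc.prems(4) by auto
    moreover have "\<And>j u. j \<in> {1..m} \<Longrightarrow> distr_coeffs u \<Longrightarrow> distr_coeffs (L j u)"
      and "\<And>j u. j \<in> {1..m} \<Longrightarrow> smooth_coeffs u \<Longrightarrow> smooth_coeffs (L j u)"
      and "\<And>j u. j \<in> {1..m} \<Longrightarrow> distr_coeffs u \<Longrightarrow> L j (L k u) = L k (L j u)"
      using Suc.prems(1-3) by simp_all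
    ultimately obtain Q where Q: "\<And>v. smooth_coeffs v \<Longrightarrow> smooth_coeffs (Q v)"
      and factor: "\<And>u. distr_coeffs u \<Longrightarrow> Lprod L m u = Q (L k u)"
      using Suc.IH by blast
    have "Lprod L (Suc m) u = Q (L (Suc m) (L k u))" if "distr_coeffs u" for u
      using factor[OF Suc.prems(1)[OF _ that]] Suc.prems(3)[OF _ that] by simp
    moreover have "smooth_coeffs (Q (L (Suc m) v))" if "smooth_coeffs v" for v
      using Q Suc.prems(2) that by simp
    ultimately show ?thesis
      by (intro exI[of _ "Q \<circ> L (Suc m)"]) simp
  qed
qed

lemma glob_hypoelliptic_Lprod_factor:
  fixes L :: "nat \<Rightarrow> ('n::finite) coeffs \<Rightarrow> 'n coeffs"
  assumes "\<And>j u. j \<in> {1..m} \<Longrightarrow> distr_coeffs u \<Longrightarrow> distr_coeffs (L j u)"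
    and "\<And>j u. j \<in> {1..m} \<Longrightarrow> smooth_coeffs u \<Longrightarrow> smooth_coeffs (L j u)"
    and "\<And>j u. j \<in> {1..m} \<Longrightarrow> distr_coeffs u \<Longrightarrow> L j (L k u) = L k (L j u)"
    and "k \<in> {1..m}" and hypoelliptic: "glob_hypoelliptic (Lprod L m)"
  shows "glob_hypoelliptic (L k)"
  unfolding glob_hypoelliptic_def
proof (intro allI impI)
  fix u
  assume u: "distr_coeffs u \<and> smooth_coeffs (L k u)"
  obtain Q where "\<forall>v. smooth_coeffs v \<longrightarrow> smooth_coeffs (Q v)"
    and "\<forall>u. distr_coeffs u \<longrightarrow> Lprod L m u = Q (L k u)"
    using Lprod_factor[of m L k, OF assms(1-4)] by blast
  then have "smooth_coeffs (Lprod L m u)"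
    using u by metis
  then show "smooth_coeffs u"
    using hypoelliptic u unfolding glob_hypoelliptic_def by blast
qed

theorem theorem5:
  fixes c :: "nat \<Rightarrow> real \<Rightarrow> complex"
    and p :: "nat \<Rightarrow> int ^ 'n \<Rightarrow> complex"
    and \<nu> :: "nat \<Rightarrow> real"
    and m :: nat
  assumes smooth: "\<forall>j\<in>{1..m}. smooth_periodic (c j)"
    and symb: "\<forall>j\<in>{1..m}. \<exists>C>0. \<forall>\<xi>. \<xi> \<noteq> 0 \<longrightarrow> norm (p j \<xi>) \<le> C * inorm \<xi> powr \<nu> j"
    and comm: "\<forall>j\<in>{1..m}. \<forall>k\<in>{1..m}. \<forall>u::'n coeffs. distr_coeffs u \<longrightarrow>
                 Lop (c j) (p j) (Lop (c k) (p k) u) = Lop (c k) (p k) (Lop (c j) (p j) u)"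
  shows "(glob_hypoelliptic (Lprod (\<lambda>j. Lop (c j) (p j)) m) \<longleftrightarrow>
            (\<forall>k\<in>{1..m}. glob_hypoelliptic (Lop (c k) (p k))))
       \<and> (glob_hypoelliptic (Lprod (\<lambda>j. Lop (c j) (p j)) m) \<longrightarrow>
            glob_hypoelliptic (Lprod (\<lambda>j. Lop (\<lambda>_. fcoef (c j) 0) (p j)) m))"
proof -
  note L = Lop_properties[OF bspec[OF smooth] bspec[OF symb]]
  have factors: "glob_hypoelliptic (Lop (c k) (p k))"
    if "glob_hypoelliptic (Lprod (\<lambda>j. Lop (c j) (p j)) m)" "k \<in> {1..m}" for k
    by (rule glob_hypoelliptic_Lprod_factor[where L = "\<lambda>j. Lop (c j) (p j)"])
      (use L(1,2) comm that in auto)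
  have "glob_hypoelliptic (Lprod (\<lambda>j. Lop (c j) (p j)) m)"
    if "\<forall>k\<in>{1..m}. glob_hypoelliptic (Lop (c k) (p k))"
    by (rule glob_hypoelliptic_Lprod) (use L(1) that in auto)
  moreover have "glob_hypoelliptic (Lprod (\<lambda>j. Lop (\<lambda>_. fcoef (c j) 0) (p j)) m)"
    if "glob_hypoelliptic (Lprod (\<lambda>j. Lop (c j) (p j)) m)"
    by (rule glob_hypoelliptic_Lprod) (use L(3,4) factors[OF that] in auto)
  ultimately show ?thesis
    using factors by blast
qed

end
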